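(* Let $0\le\lambda<n$ and $1\le p<\infty$. If $f\in V_0L^{p,\lambda}\cap V_\infty L^{p,\lambda}$ is uniformly continuous on $\mathbb{R}^n$, then $f$ can be approximated in the norm $\|\cdot\|_{p,\lambda}$ by functions from $V_0L^{p,\lambda}\cap V_\infty L^{p,\lambda}\cap C^\infty(\mathbb{R}^n)$.
   Context: $B(x,r)$ is the open ball in $\mathbb{R}^n$ with center $x$ and radius $r$. For $f\in L^1_{\mathrm{loc}}(\mathbb{R}^n)$ let $\mathfrak{M}_{p,\lambda}(f;x,r):=r^{-\lambda}\int_{B(x,r)}|f(y)|^p\,dy$. The homogeneous Morrey space $L^{p,\lambda}(\mathbb{R}^n)$ consists of $f\in L^p_{\mathrm{loc}}(\mathbb{R}^n)$ with $\|f\|_{p,\lambda}:=\sup_{x\in\mathbb{R}^n,\,r>0}\mathfrak{M}_{p,\lambda}(f;x,r)^{1/p}<\infty$. $V_0L^{p,\lambda}=\{f\in L^{p,\lambda}:\lim_{r\to0}\sup_{x}\mathfrak{M}_{p,\lambda}(f;x,r)=0\}$ and $V_\infty L^{p,\lambda}=\{f\in L^{p,\lambda}:\lim_{r\to\infty}\sup_{x}\mathfrak{M}_{p,\lambda}(f;x,r)=0\}$. *)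

theory Defs
  imports "HOL-Analysis.Analysis"
begin

text \<open>Euclidean space R^n is modelled by a type 'a :: euclidean_space with n = DIM('a).
  Integrals are Lebesgue integrals (nonnegative integrals in ennreal).\<close>

definition morrey_M :: "real \<Rightarrow> real \<Rightarrow> ('a::euclidean_space \<Rightarrow> real) \<Rightarrow> 'a \<Rightarrow> real \<Rightarrow> ennreal" where
  "morrey_M p lam f x r =
     ennreal (r powr (- lam)) * (\<integral>\<^sup>+ y \<in> ball x r. ennreal (\<bar>f y\<bar> powr p) \<partial>lebesgue)"

definition morrey_sup :: "real \<Rightarrow> real \<Rightarrow> ('a::euclidean_space \<Rightarrow> real) \<Rightarrow> ennreal" where
  "morrey_sup p lam f = (SUP xr \<in> UNIV \<times> {0<..}. morrey_M p lam f (fst xr) (snd xr))"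

text \<open>The Morrey norm ||f||_{p,lam} (meaningful for f in the Morrey space, where the sup is finite).\<close>
definition morrey_norm :: "real \<Rightarrow> real \<Rightarrow> ('a::euclidean_space \<Rightarrow> real) \<Rightarrow> real" where
  "morrey_norm p lam f = (enn2real (morrey_sup p lam f)) powr (1 / p)"

definition Lp_loc :: "real \<Rightarrow> ('a::euclidean_space \<Rightarrow> real) set" where
  "Lp_loc p = {f. f \<in> borel_measurable lebesgue \<and>
     (\<forall>K. compact K \<longrightarrow> (\<integral>\<^sup>+ y \<in> K. ennreal (\<bar>f y\<bar> powr p) \<partial>lebesgue) < \<infinity>)}"

definition morrey_space :: "real \<Rightarrow> real \<Rightarrow> ('a::euclidean_space \<Rightarrow> real) set" where
  "morrey_space p lam = {f. f \<in> Lp_loc p \<and> morrey_sup p lam f < \<infinity>}"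

definition V0_morrey :: "real \<Rightarrow> real \<Rightarrow> ('a::euclidean_space \<Rightarrow> real) set" where
  "V0_morrey p lam = {f. f \<in> morrey_space p lam \<and>
     ((\<lambda>r. SUP x. morrey_M p lam f x r) \<longlongrightarrow> 0) (at_right 0)}"

definition Vinf_morrey :: "real \<Rightarrow> real \<Rightarrow> ('a::euclidean_space \<Rightarrow> real) set" where
  "Vinf_morrey p lam = {f. f \<in> morrey_space p lam \<and>
     ((\<lambda>r. SUP x. morrey_M p lam f x r) \<longlongrightarrow> 0) at_top}"

text \<open>C^infinity(R^n): f is differentiable everywhere and all its partial derivatives
  are again C^infinity (coinductively, i.e. partial derivatives of all orders exist).\<close>
coinductive smooth :: "('a::euclidean_space \<Rightarrow> real) \<Rightarrow> bool" where
  "(\<forall>x. f differentiable (at x)) \<Longrightarrow>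
   (\<forall>b\<in>Basis. smooth (\<lambda>x. frechet_derivative f (at x) b)) \<Longrightarrow> smooth f"

end

theory Submission
  imports Defs
begin

text \<open>Let \<open>g\<close> be a quasi-interpolant of \<open>f\<close> on a fine grid of mesh \<open>\<delta>\<close>: a smooth partition of
  unity \<open>\<psi>\<^sub>z\<close> of product form, with coefficients the values of \<open>f\<close> at minimisers of \<open>\<bar>f\<bar>\<close> on the
  grid cells.  Then \<open>g\<close> is smooth, uniform continuity makes \<open>\<bar>f - g\<bar> \<le> \<eta>\<close> everywhere, and
  \<open>\<bar>g\<bar> \<le> \<bar>f\<bar>\<close> cell by cell gives \<open>\<M>(g; x, r) \<le> C \<M>(f; x, 5nr)\<close> for \<open>r \<ge> \<delta>\<close>.  Hence the Morrey
  averages of \<open>f - g\<close> are at most \<open>|B\<^sub>1| \<eta>\<^sup>p r\<^sup>n\<^sup>-\<^sup>\<lambda>\<close> for small \<open>r\<close> (here \<open>\<lambda> < n\<close> is used) and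
  controlled by those of \<open>f \<in> V\<^sub>\<infinity>\<close> for large \<open>r\<close>, so \<open>f - g \<in> V\<^sub>0 \<inter> V\<^sub>\<infinity>\<close> with small norm;
  finally \<open>g = f - (f - g) \<in> V\<^sub>0 \<inter> V\<^sub>\<infinity>\<close>.\<close>

section \<open>Smooth functions of one real variable\<close>

coinductive real_smooth :: "(real \<Rightarrow> real) \<Rightarrow> bool" where
  "(\<forall>t. u differentiable (at t)) \<Longrightarrow> real_smooth (deriv u) \<Longrightarrow> real_smooth u"

lemma real_smooth_coinduct_weak:
  assumes "X u"
    and "\<And>h. X h \<Longrightarrow> (\<forall>t. h differentiable at t) \<and> (X (deriv h) \<or> real_smooth (deriv h))"
  shows "real_smooth u"
  by (rule real_smooth.coinduct[of X]) (use assms in auto)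

lemma real_smooth_DERIV: "real_smooth u \<Longrightarrow> (u has_real_derivative deriv u t) (at t)"
  by (erule real_smooth.cases) (simp add: DERIV_deriv_iff_real_differentiable)

lemma real_smooth_deriv: "real_smooth u \<Longrightarrow> real_smooth (deriv u)"
  by (erule real_smooth.cases) simp

lemma real_smooth_const: "real_smooth (\<lambda>t. c)"
proof -
  have "deriv (\<lambda>t::real. c::real) = (\<lambda>t. 0)" for c by (rule ext) simp
  then show ?thesis
    by (intro real_smooth_coinduct_weak[where X="\<lambda>u. \<exists>c. u = (\<lambda>t. c)"]) auto
qed

lemma real_smooth_add: "real_smooth u \<Longrightarrow> real_smooth v \<Longrightarrow> real_smooth (\<lambda>t. u t + v t)"
proof (rule real_smooth_coinduct_weak[where
      X="\<lambda>h. \<exists>u v. real_smooth u \<and> real_smooth v \<and> h = (\<lambda>t. u t + v t)"], blast)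
  fix h assume "\<exists>u v. real_smooth u \<and> real_smooth v \<and> h = (\<lambda>t. u t + v t)"
  then obtain u v where uv: "real_smooth u" "real_smooth v" "h = (\<lambda>t. u t + v t)" by blast
  have h': "(h has_real_derivative deriv u t + deriv v t) (at t)" for t
    unfolding uv(3) by (intro DERIV_add real_smooth_DERIV uv)
  then have "deriv h = (\<lambda>t. deriv u t + deriv v t)" by (intro ext DERIV_imp_deriv)
  then show "(\<forall>t. h differentiable at t) \<and>
      ((\<exists>u v. real_smooth u \<and> real_smooth v \<and> deriv h = (\<lambda>t. u t + v t)) \<or> real_smooth (deriv h))"
    using h' real_smooth_deriv[OF uv(1)] real_smooth_deriv[OF uv(2)] real_differentiable_def by blast
qed

text \<open>Products are handled through finite sums of products (lists of factor pairs), a class that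
  is closed under differentiation.\<close>

definition sum_products :: "((real \<Rightarrow> real) \<times> (real \<Rightarrow> real)) list \<Rightarrow> real \<Rightarrow> real" where
  "sum_products ps t = (\<Sum>(u, v)\<leftarrow>ps. u t * v t)"

definition deriv_products ::
    "((real \<Rightarrow> real) \<times> (real \<Rightarrow> real)) list \<Rightarrow> ((real \<Rightarrow> real) \<times> (real \<Rightarrow> real)) list" where
  "deriv_products ps = concat (map (\<lambda>(u, v). [(deriv u, v), (u, deriv v)]) ps)"

lemma sum_products_DERIV:
  "\<forall>(u, v)\<in>set ps. real_smooth u \<and> real_smooth v \<Longrightarrow>
    (sum_products ps has_real_derivative sum_products (deriv_products ps) t) (at t)"
proof (induction ps)
  case Nil
  then show ?case by (simp add: sum_products_def deriv_products_def)
next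
  case (Cons a ps)
  obtain u v where a: "a = (u, v)" by force
  have "real_smooth u" "real_smooth v" using Cons.prems a by auto
  moreover have "sum_products (a # ps) = (\<lambda>t. u t * v t + sum_products ps t)"
    by (rule ext) (simp add: sum_products_def a)
  moreover have "sum_products (deriv_products (a # ps)) t =
      deriv u t * v t + u t * deriv v t + sum_products (deriv_products ps) t"
    by (simp add: sum_products_def deriv_products_def a)
  ultimately show ?case
    using Cons by (auto intro!: derivative_eq_intros real_smooth_DERIV simp: algebra_simps)
qed

lemma real_smooth_sum_products:
  "\<forall>(u, v)\<in>set ps. real_smooth u \<and> real_smooth v \<Longrightarrow> real_smooth (sum_products ps)"
proof (rule real_smooth_coinduct_weak[where
      X="\<lambda>h. \<exists>ps. (\<forall>(u, v)\<in>set ps. real_smooth u \<and> real_smooth v) \<and> h = sum_products ps"], blast)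
  fix h assume "\<exists>ps. (\<forall>(u, v)\<in>set ps. real_smooth u \<and> real_smooth v) \<and> h = sum_products ps"
  then obtain ps where ps: "\<forall>(u, v)\<in>set ps. real_smooth u \<and> real_smooth v" "h = sum_products ps"
    by blast
  have h': "(h has_real_derivative sum_products (deriv_products ps) t) (at t)" for t
    using sum_products_DERIV[OF ps(1)] ps(2) by simp
  then have "deriv h = sum_products (deriv_products ps)" by (intro ext DERIV_imp_deriv)
  moreover have "\<forall>(u, v)\<in>set (deriv_products ps). real_smooth u \<and> real_smooth v"
    using ps(1) by (auto simp: deriv_products_def real_smooth_deriv)
  ultimately show "(\<forall>t. h differentiable at t) \<and>
      ((\<exists>ps. (\<forall>(u, v)\<in>set ps. real_smooth u \<and> real_smooth v) \<and> deriv h = sum_products ps) \<or>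
        real_smooth (deriv h))"
    using h' real_differentiable_def by blast
qed

lemma real_smooth_mult: "real_smooth u \<Longrightarrow> real_smooth v \<Longrightarrow> real_smooth (\<lambda>t. u t * v t)"
proof -
  have "sum_products [(u, v)] = (\<lambda>t. u t * v t)" by (rule ext) (simp add: sum_products_def)
  then show "real_smooth u \<Longrightarrow> real_smooth v \<Longrightarrow> ?thesis"
    using real_smooth_sum_products[of "[(u, v)]"] by simp
qed

lemma real_smooth_cmult: "real_smooth u \<Longrightarrow> real_smooth (\<lambda>t. c * u t)"
  using real_smooth_mult[OF real_smooth_const] .

lemma real_smooth_compose_affine: "real_smooth u \<Longrightarrow> real_smooth (\<lambda>t. u (a * t + b))"
proof (rule real_smooth_coinduct_weak[where X="\<lambda>h. \<exists>v. real_smooth v \<and> h = (\<lambda>t. v (a * t + b))"],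
    blast)
  fix h assume "\<exists>v. real_smooth v \<and> h = (\<lambda>t. v (a * t + b))"
  then obtain v where v: "real_smooth v" "h = (\<lambda>t. v (a * t + b))" by blast
  have h': "(h has_real_derivative (\<lambda>s. a * deriv v s) (a * t + b)) (at t)" for t
    unfolding v(2)
    by (rule DERIV_chain2[OF real_smooth_DERIV[OF v(1)], THEN DERIV_cong])
      (auto intro!: derivative_eq_intros)
  then have "deriv h = (\<lambda>t. (\<lambda>s. a * deriv v s) (a * t + b))" by (intro ext DERIV_imp_deriv)
  then show "(\<forall>t. h differentiable at t) \<and>
      ((\<exists>v. real_smooth v \<and> deriv h = (\<lambda>t. v (a * t + b))) \<or> real_smooth (deriv h))"
    using h' real_smooth_cmult[OF real_smooth_deriv[OF v(1)]] real_differentiable_def by blast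
qed

text \<open>Likewise, all derivatives of \<open>1 / w\<close> are finite sums \<open>\<Sum> u\<^sub>k / w ^ m\<^sub>k\<close> with smooth \<open>u\<^sub>k\<close>.\<close>

definition sum_inverse_powers ::
    "(real \<Rightarrow> real) \<Rightarrow> ((real \<Rightarrow> real) \<times> nat) list \<Rightarrow> real \<Rightarrow> real" where
  "sum_inverse_powers w ps t = (\<Sum>(u, m)\<leftarrow>ps. u t * (1 / w t) ^ m)"

definition deriv_inverse_powers ::
    "(real \<Rightarrow> real) \<Rightarrow> ((real \<Rightarrow> real) \<times> nat) list \<Rightarrow> ((real \<Rightarrow> real) \<times> nat) list" where
  "deriv_inverse_powers w ps =
     concat (map (\<lambda>(u, m). [(deriv u, m), (\<lambda>t. - real m * (u t * deriv w t), Suc m)]) ps)"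

lemma inverse_power_DERIV:
  assumes "real_smooth w" "w t \<noteq> 0"
  shows "((\<lambda>t. (1 / w t) ^ m) has_real_derivative - real m * deriv w t * (1 / w t) ^ Suc m) (at t)"
proof (cases m)
  case (Suc k)
  have "((\<lambda>t. 1 / w t) has_real_derivative - deriv w t * (1 / w t)\<^sup>2) (at t)"
    using assms
    by (auto intro!: derivative_eq_intros real_smooth_DERIV simp: power2_eq_square field_simps)
  from DERIV_cong[OF DERIV_power[OF this, of m]] show ?thesis
    using assms(2) by (simp add: Suc power2_eq_square field_simps)
qed simp

lemma sum_inverse_powers_DERIV:
  assumes "real_smooth w" "\<And>t. w t \<noteq> 0" and "\<forall>(u, m)\<in>set ps. real_smooth u"
  shows "(sum_inverse_powers w ps has_real_derivative
      sum_inverse_powers w (deriv_inverse_powers w ps) t) (at t)"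
  using assms(3)
proof (induction ps)
  case Nil
  then show ?case by (simp add: sum_inverse_powers_def deriv_inverse_powers_def)
next
  case (Cons a ps)
  obtain u m where a: "a = (u, m)" by force
  have u: "real_smooth u" using Cons.prems a by auto
  have lhs: "sum_inverse_powers w (a # ps) = (\<lambda>t. u t * (1 / w t) ^ m + sum_inverse_powers w ps t)"
    by (rule ext) (simp add: sum_inverse_powers_def a)
  have rhs: "sum_inverse_powers w (deriv_inverse_powers w (a # ps)) t =
      deriv u t * (1 / w t) ^ m + (- real m * (u t * deriv w t)) * (1 / w t) ^ Suc m +
      sum_inverse_powers w (deriv_inverse_powers w ps) t"
    by (simp add: sum_inverse_powers_def deriv_inverse_powers_def a)
  have IH: "(sum_inverse_powers w ps has_real_derivative
      sum_inverse_powers w (deriv_inverse_powers w ps) t) (at t)"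
    using Cons by auto
  show ?case unfolding lhs rhs
    by (rule DERIV_cong[OF DERIV_add[OF DERIV_mult[OF real_smooth_DERIV[OF u]
            inverse_power_DERIV[OF assms(1,2)]] IH]]) (simp add: algebra_simps)
qed

lemma real_smooth_sum_inverse_powers:
  assumes w: "real_smooth w" "\<And>t. w t \<noteq> 0" and "\<forall>(u, m)\<in>set ps. real_smooth u"
  shows "real_smooth (sum_inverse_powers w ps)"
  using assms(3)
proof (rule real_smooth_coinduct_weak[where
      X="\<lambda>h. \<exists>ps. (\<forall>(u, m)\<in>set ps. real_smooth u) \<and> h = sum_inverse_powers w ps", OF exI, OF conjI])
  fix h assume "\<exists>ps. (\<forall>(u, m)\<in>set ps. real_smooth u) \<and> h = sum_inverse_powers w ps"
  then obtain ps where ps: "\<forall>(u, m)\<in>set ps. real_smooth u" "h = sum_inverse_powers w ps" by blast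
  have h': "(h has_real_derivative sum_inverse_powers w (deriv_inverse_powers w ps) t) (at t)" for t
    using sum_inverse_powers_DERIV[OF w ps(1)] ps(2) by simp
  then have "deriv h = sum_inverse_powers w (deriv_inverse_powers w ps)"
    by (intro ext DERIV_imp_deriv)
  moreover have "\<forall>(u, m)\<in>set (deriv_inverse_powers w ps). real_smooth u"
  proof -
    have neg_cmult: "real_smooth (\<lambda>t. - (c * v t))" if "real_smooth v" for c v
      using real_smooth_cmult[OF that, of "- c"] by simp
    show ?thesis
      using ps(1) by (auto simp: deriv_inverse_powers_def real_smooth_deriv
          intro!: neg_cmult real_smooth_mult w(1) real_smooth_deriv)
  qed
  ultimately show "(\<forall>t. h differentiable at t) \<and>
      ((\<exists>ps. (\<forall>(u, m)\<in>set ps. real_smooth u) \<and> deriv h = sum_inverse_powers w ps) \<or>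
        real_smooth (deriv h))"
    using h' real_differentiable_def by blast
qed auto

lemma real_smooth_inverse:
  assumes "real_smooth w" "\<And>t. w t \<noteq> 0"
  shows "real_smooth (\<lambda>t. 1 / w t)"
proof -
  have "sum_inverse_powers w [(\<lambda>t. 1, 1)] = (\<lambda>t. 1 / w t)"
    by (rule ext) (simp add: sum_inverse_powers_def)
  then show ?thesis
    using real_smooth_sum_inverse_powers[OF assms, of "[(\<lambda>t. 1, 1)]"] by (simp add: real_smooth_const)
qed

section \<open>A smooth step function\<close>

text \<open>The functions \<open>t\<^sup>-\<^sup>m e\<^sup>-\<^sup>1\<^sup>/\<^sup>t\<close> (extended by 0 to \<open>t \<le> 0\<close>) span a space that is closed under
  differentiation; this gives smoothness of \<open>e\<^sup>-\<^sup>1\<^sup>/\<^sup>t\<close> without computing its derivatives.\<close>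

definition exp_recip_pow :: "nat \<Rightarrow> real \<Rightarrow> real" where
  "exp_recip_pow m t = (if t > 0 then (1 / t) ^ m * exp (- (1 / t)) else 0)"

abbreviation exp_recip_pow_deriv :: "nat \<Rightarrow> real \<Rightarrow> real" where
  "exp_recip_pow_deriv m t \<equiv> exp_recip_pow (Suc (Suc m)) t - real m * exp_recip_pow (Suc m) t"

lemma exp_recip_pow_DERIV_pos:
  assumes "t > 0"
  shows "(exp_recip_pow m has_real_derivative exp_recip_pow_deriv m t) (at t)"
proof -
  have recip: "((\<lambda>t. 1 / t) has_real_derivative - ((1 / t)\<^sup>2)) (at t)"
    using assms by (auto intro!: derivative_eq_intros simp: power2_eq_square field_simps)
  have exp: "((\<lambda>t. exp (- (1 / t))) has_real_derivative exp (- (1 / t)) * (1 / t)\<^sup>2) (at t)"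
    using assms by (auto intro!: derivative_eq_intros simp: power2_eq_square field_simps)
  have "((\<lambda>t. (1 / t) ^ m * exp (- (1 / t))) has_real_derivative exp_recip_pow_deriv m t) (at t)"
    by (rule DERIV_cong[OF DERIV_mult[OF DERIV_power[OF recip, of m] exp]])
      (cases m; use assms in \<open>auto simp: exp_recip_pow_def power_Suc power2_eq_square field_simps\<close>)
  then show ?thesis
    by (rule has_field_derivative_transform_within_open[of _ _ _ "{0<..}"])
      (use assms in \<open>auto simp: exp_recip_pow_def\<close>)
qed

lemma exp_recip_pow_DERIV_neg:
  assumes "t < 0"
  shows "(exp_recip_pow m has_real_derivative exp_recip_pow_deriv m t) (at t)"
proof -
  have "(exp_recip_pow m has_real_derivative 0) (at t)"
    by (rule has_field_derivative_transform_within_open[of "\<lambda>t. 0" _ _ "{..<0}"])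
      (use assms in \<open>auto simp: exp_recip_pow_def\<close>)
  then show ?thesis using assms by (simp add: exp_recip_pow_def)
qed

text \<open>At 0 the difference quotient is \<open>h\<^sup>-\<^sup>(\<^sup>m\<^sup>+\<^sup>1\<^sup>) e\<^sup>-\<^sup>1\<^sup>/\<^sup>h\<close> from the right, which tends to 0.\<close>

lemma exp_recip_pow_DERIV_0:
  "(exp_recip_pow m has_real_derivative exp_recip_pow_deriv m 0) (at 0)"
proof -
  have "((\<lambda>h. (exp_recip_pow m (0 + h) - exp_recip_pow m 0) / h) \<longlongrightarrow> 0) (at 0)"
  proof (rule filterlim_split_at)
    show "((\<lambda>h. (exp_recip_pow m (0 + h) - exp_recip_pow m 0) / h) \<longlongrightarrow> 0) (at_left 0)"
      by (rule tendsto_eventually, rule eventually_mono[OF eventually_at_left_real[of "-1" 0]])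
        (auto simp: exp_recip_pow_def)
    have "((\<lambda>h. (inverse h) ^ Suc m / exp (inverse h)) \<longlongrightarrow> 0) (at_right (0::real))"
      by (rule filterlim_compose[OF tendsto_power_div_exp_0 filterlim_inverse_at_top_right])
    then show "((\<lambda>h. (exp_recip_pow m (0 + h) - exp_recip_pow m 0) / h) \<longlongrightarrow> 0) (at_right 0)"
      by (rule Lim_transform_eventually, intro eventually_mono[OF eventually_at_right_real[of 0 1]])
        (auto simp: exp_recip_pow_def exp_minus field_simps)
  qed
  then show ?thesis by (simp add: DERIV_def exp_recip_pow_def)
qed

lemma exp_recip_pow_DERIV:
  "(exp_recip_pow m has_real_derivative exp_recip_pow_deriv m t) (at t)"
  using exp_recip_pow_DERIV_pos[of t m] exp_recip_pow_DERIV_neg[of t m] exp_recip_pow_DERIV_0[of m]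
  by (cases t "0::real" rule: linorder_cases) auto

inductive_set exp_recip_span :: "(real \<Rightarrow> real) set" where
  "exp_recip_pow m \<in> exp_recip_span"
| "u \<in> exp_recip_span \<Longrightarrow> v \<in> exp_recip_span \<Longrightarrow> (\<lambda>t. u t + v t) \<in> exp_recip_span"
| "u \<in> exp_recip_span \<Longrightarrow> (\<lambda>t. c * u t) \<in> exp_recip_span"

lemma exp_recip_span_DERIV:
  "u \<in> exp_recip_span \<Longrightarrow> \<exists>u'\<in>exp_recip_span. \<forall>t. (u has_real_derivative u' t) (at t)"
proof (induction rule: exp_recip_span.induct)
  case (1 m)
  have "(\<lambda>t. exp_recip_pow (Suc (Suc m)) t + (- real m) * exp_recip_pow (Suc m) t) \<in> exp_recip_span"
    by (intro exp_recip_span.intros)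
  then show ?case using exp_recip_pow_DERIV[of m] by (intro bexI) auto
next
  case (2 u v)
  then obtain u' v' where "u' \<in> exp_recip_span" "v' \<in> exp_recip_span"
    "\<And>t. (u has_real_derivative u' t) (at t)" "\<And>t. (v has_real_derivative v' t) (at t)"
    by blast
  then show ?case by (intro bexI[of _ "\<lambda>t. u' t + v' t"] allI DERIV_add exp_recip_span.intros)
next
  case (3 u c)
  then obtain u' where "u' \<in> exp_recip_span" "\<And>t. (u has_real_derivative u' t) (at t)" by blast
  then show ?case by (intro bexI[of _ "\<lambda>t. c * u' t"] allI DERIV_cmult exp_recip_span.intros)
qed

lemma real_smooth_exp_recip_span: "u \<in> exp_recip_span \<Longrightarrow> real_smooth u"
proof (rule real_smooth_coinduct_weak[where X="\<lambda>u. u \<in> exp_recip_span"])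
  fix h assume "h \<in> exp_recip_span"
  then obtain u' where u': "u' \<in> exp_recip_span" "\<And>t. (h has_real_derivative u' t) (at t)"
    using exp_recip_span_DERIV by blast
  then have "deriv h = u'" by (intro ext DERIV_imp_deriv)
  then show "(\<forall>t. h differentiable at t) \<and> (deriv h \<in> exp_recip_span \<or> real_smooth (deriv h))"
    using u' real_differentiable_def by blast
qed

definition flat_exp :: "real \<Rightarrow> real" where
  "flat_exp t = (if t > 0 then exp (- (1 / t)) else 0)"

lemma real_smooth_flat_exp: "real_smooth flat_exp"
proof -
  have "flat_exp = exp_recip_pow 0" by (rule ext) (simp add: flat_exp_def exp_recip_pow_def)
  then show ?thesis by (metis real_smooth_exp_recip_span exp_recip_span.intros(1))
qed

lemma flat_exp_nonneg: "0 \<le> flat_exp t"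
  by (simp add: flat_exp_def)

lemma flat_exp_pos: "t > 0 \<Longrightarrow> 0 < flat_exp t"
  by (simp add: flat_exp_def)

lemma flat_exp_eq_0: "t \<le> 0 \<Longrightarrow> flat_exp t = 0"
  by (simp add: flat_exp_def)

lemma flat_exp_mono: "t \<le> t' \<Longrightarrow> flat_exp t \<le> flat_exp t'"
  by (auto simp: flat_exp_def frac_le)

definition smooth_step :: "real \<Rightarrow> real" where
  "smooth_step t = flat_exp t * (1 / (flat_exp t + flat_exp (1 - t)))"

lemma smooth_step_denominator_pos: "0 < flat_exp t + flat_exp (1 - t)"
  using flat_exp_pos[of t] flat_exp_pos[of "1 - t"] flat_exp_nonneg[of t] flat_exp_nonneg[of "1 - t"]
  by (cases "t > 0") auto

lemma real_smooth_smooth_step: "real_smooth smooth_step"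
proof -
  note e = real_smooth_flat_exp
  have "real_smooth (\<lambda>t. 1 / (flat_exp t + flat_exp ((-1) * t + 1)))"
    by (intro real_smooth_inverse real_smooth_add e real_smooth_compose_affine)
      (use smooth_step_denominator_pos in \<open>simp add: less_imp_neq[symmetric]\<close>)
  then have "real_smooth (\<lambda>t. flat_exp t * (1 / (flat_exp t + flat_exp ((-1) * t + 1))))"
    by (rule real_smooth_mult[OF e])
  then show ?thesis unfolding smooth_step_def[abs_def] by simp
qed

lemma smooth_step_eq_0: "t \<le> 0 \<Longrightarrow> smooth_step t = 0"
  by (simp add: smooth_step_def flat_exp_eq_0)

lemma smooth_step_eq_1: "t \<ge> 1 \<Longrightarrow> smooth_step t = 1"
  using flat_exp_pos[of t] by (simp add: smooth_step_def flat_exp_eq_0)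

lemma smooth_step_mono:
  assumes "t \<le> t'"
  shows "smooth_step t \<le> smooth_step t'"
proof -
  have "flat_exp t * flat_exp (1 - t') \<le> flat_exp t' * flat_exp (1 - t)"
    using assms by (intro mult_mono flat_exp_mono) (auto simp: flat_exp_nonneg)
  then have "flat_exp t * (flat_exp t' + flat_exp (1 - t')) \<le>
      flat_exp t' * (flat_exp t + flat_exp (1 - t))"
    by (simp add: algebra_simps)
  then show ?thesis
    using smooth_step_denominator_pos[of t] smooth_step_denominator_pos[of t']
    by (simp add: smooth_step_def divide_simps mult.commute)
qed

definition smooth_hat :: "real \<Rightarrow> real" where
  "smooth_hat s = smooth_step (s + 1) - smooth_step s"

lemma real_smooth_smooth_hat: "real_smooth smooth_hat"
proof -
  have "real_smooth (\<lambda>s. smooth_step (1 * s + 1) + (-1) * smooth_step s)"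
    by (intro real_smooth_add real_smooth_cmult real_smooth_compose_affine real_smooth_smooth_step)
  then show ?thesis unfolding smooth_hat_def[abs_def] by simp
qed

lemma smooth_hat_nonneg: "0 \<le> smooth_hat s"
  by (simp add: smooth_hat_def smooth_step_mono)

lemma smooth_hat_eq_0: "\<bar>s\<bar> \<ge> 1 \<Longrightarrow> smooth_hat s = 0"
  by (cases "s < 0") (simp_all add: smooth_hat_def smooth_step_eq_0 smooth_step_eq_1)

lemma sum_smooth_hat_translates:
  "(\<Sum>j\<in>{\<lfloor>s\<rfloor> - 1..\<lfloor>s\<rfloor> + 1}. smooth_hat (s - of_int j)) = 1"
proof -
  define m where "m = \<lfloor>s\<rfloor>"
  have m: "of_int m \<le> s" "s < of_int m + 1" unfolding m_def by linarith+
  have "{m - 1..m + 1} = {m - 1, m, m + 1}" by auto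
  then show ?thesis
    using m by (simp add: m_def[symmetric] smooth_hat_def smooth_step_eq_0 smooth_step_eq_1)
qed

section \<open>Smoothness of local tensor sums\<close>

text \<open>Partial derivatives of finite sums of products of smooth functions of single coordinates are
  again of this form.\<close>

definition tensor_sum ::
    "('j set) \<Rightarrow> ('j \<Rightarrow> real) \<Rightarrow> ('j \<Rightarrow> 'a \<Rightarrow> real \<Rightarrow> real) \<Rightarrow> 'a::euclidean_space \<Rightarrow> real" where
  "tensor_sum J c u x = (\<Sum>j\<in>J. c j * (\<Prod>i\<in>Basis. u j i (x \<bullet> i)))"

definition deriv_factor ::
    "'a \<Rightarrow> ('j \<Rightarrow> 'a \<Rightarrow> real \<Rightarrow> real) \<Rightarrow> 'j \<Rightarrow> 'a::euclidean_space \<Rightarrow> real \<Rightarrow> real" where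
  "deriv_factor b u j i = (if i = b then deriv (u j i) else u j i)"

lemma tensor_sum_has_derivative:
  assumes "\<forall>j i. real_smooth (u j i)"
  shows "(tensor_sum J c u has_derivative (\<lambda>v. \<Sum>j\<in>J. c j *
      (\<Sum>i\<in>Basis. (v \<bullet> i * deriv (u j i) (x \<bullet> i)) * (\<Prod>k\<in>Basis - {i}. u j k (x \<bullet> k))))) (at x)"
proof -
  have "((\<lambda>x. u j i (x \<bullet> i)) has_derivative (\<lambda>v. v \<bullet> i * deriv (u j i) (x \<bullet> i))) (at x)" for j i
    by (rule DERIV_compose_FDERIV[OF real_smooth_DERIV])
      (use assms in \<open>auto intro!: derivative_eq_intros\<close>)
  then show ?thesis unfolding tensor_sum_def[abs_def]
    by (intro has_derivative_sum has_derivative_mult_right has_derivative_prod)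
qed

lemma frechet_derivative_tensor_sum:
  assumes "\<forall>j i. real_smooth (u j i)" "b \<in> Basis"
  shows "frechet_derivative (tensor_sum J c u) (at x) b = tensor_sum J c (deriv_factor b u) x"
proof -
  have "frechet_derivative (tensor_sum J c u) (at x) b =
      (\<Sum>j\<in>J. c j * (deriv (u j b) (x \<bullet> b) * (\<Prod>k\<in>Basis - {b}. u j k (x \<bullet> k))))"
    unfolding frechet_derivative_at[OF tensor_sum_has_derivative[OF assms(1)], symmetric]
    using sum_inner_Basis_eq[OF assms(2)] by (simp only: inner_commute[of b] mult.assoc)
  also have "\<dots> = tensor_sum J c (deriv_factor b u) x"
    unfolding tensor_sum_def
  proof (intro sum.cong refl)
    fix j
    have "(\<Prod>i\<in>Basis. deriv_factor b u j i (x \<bullet> i)) =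
        deriv_factor b u j b (x \<bullet> b) * (\<Prod>i\<in>Basis - {b}. deriv_factor b u j i (x \<bullet> i))"
      using assms(2) by (simp add: prod.remove)
    also have "(\<Prod>i\<in>Basis - {b}. deriv_factor b u j i (x \<bullet> i)) = (\<Prod>k\<in>Basis - {b}. u j k (x \<bullet> k))"
      by (intro prod.cong refl) (simp add: deriv_factor_def)
    finally show "c j * (deriv (u j b) (x \<bullet> b) * (\<Prod>k\<in>Basis - {b}. u j k (x \<bullet> k))) =
        c j * (\<Prod>i\<in>Basis. deriv_factor b u j i (x \<bullet> i))"
      by (simp add: deriv_factor_def)
  qed
  finally show ?thesis .
qed

definition locally_tensor_sum :: "('a::euclidean_space \<Rightarrow> real) \<Rightarrow> bool" where
  "locally_tensor_sum F \<longleftrightarrow> (\<forall>x0. \<exists>U J c u. open U \<and> x0 \<in> U \<and> (\<forall>j i. real_smooth (u j i)) \<and>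
      (\<forall>x\<in>U. F x = tensor_sum (J :: ('a \<Rightarrow> int) set) c u x))"

lemma smooth_coinduct_weak:
  assumes "X f" and "\<And>h. X h \<Longrightarrow> (\<forall>x. h differentiable (at x)) \<and>
     (\<forall>b\<in>Basis. X (\<lambda>x. frechet_derivative h (at x) b) \<or> smooth (\<lambda>x. frechet_derivative h (at x) b))"
  shows "smooth f"
  using assms(1) by (coinduction arbitrary: f rule: smooth.coinduct) (use assms(2) in simp)

lemma locally_tensor_sum_has_derivative:
  fixes h :: "'a::euclidean_space \<Rightarrow> real"
  assumes "locally_tensor_sum h"
  shows "\<exists>U J c u. open U \<and> x0 \<in> U \<and> (\<forall>j i. real_smooth (u j i)) \<and>
    (\<forall>x\<in>U. (h has_derivative frechet_derivative (tensor_sum (J :: ('a \<Rightarrow> int) set) c u) (at x)) (at x))"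
proof -
  obtain U and J :: "('a \<Rightarrow> int) set" and c u where U: "open U" "x0 \<in> U"
    "\<forall>j i. real_smooth (u j i)" "\<forall>x\<in>U. h x = tensor_sum J c u x"
    using assms unfolding locally_tensor_sum_def by meson
  have "(h has_derivative frechet_derivative (tensor_sum J c u) (at x)) (at x)" if "x \<in> U" for x
  proof (rule has_derivative_transform_within_open[OF _ U(1) that])
    show "(tensor_sum J c u has_derivative frechet_derivative (tensor_sum J c u) (at x)) (at x)"
      using tensor_sum_has_derivative[OF U(3), of J c x]
        frechet_derivative_at[OF tensor_sum_has_derivative[OF U(3), of J c x]] by simp
  qed (use U(4) in simp)
  then show ?thesis using U(1-3) by blast
qed

lemma smooth_if_locally_tensor_sum:
  fixes F :: "'a::euclidean_space \<Rightarrow> real"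
  shows "locally_tensor_sum F \<Longrightarrow> smooth F"
proof (rule smooth_coinduct_weak[where X=locally_tensor_sum])
  fix h :: "'a \<Rightarrow> real" assume h: "locally_tensor_sum h"
  note local = locally_tensor_sum_has_derivative[OF h]
  have "h differentiable (at x)" for x
    using local[of x] unfolding differentiable_def by blast
  moreover have "locally_tensor_sum (\<lambda>x. frechet_derivative h (at x) b)" if b: "b \<in> Basis" for b
    unfolding locally_tensor_sum_def
  proof
    fix x0
    obtain U and J :: "('a \<Rightarrow> int) set" and c u where U: "open U" "x0 \<in> U"
      "\<forall>j i. real_smooth (u j i)"
      "\<forall>x\<in>U. (h has_derivative frechet_derivative (tensor_sum J c u) (at x)) (at x)"
      using local[of x0] by meson
    have "\<forall>x\<in>U. frechet_derivative h (at x) b = tensor_sum J c (deriv_factor b u) x"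
    proof
      fix x assume "x \<in> U"
      then have "frechet_derivative h (at x) = frechet_derivative (tensor_sum J c u) (at x)"
        using U(4) frechet_derivative_at by metis
      then show "frechet_derivative h (at x) b = tensor_sum J c (deriv_factor b u) x"
        using frechet_derivative_tensor_sum[OF U(3) b] by simp
    qed
    moreover have "\<forall>j i. real_smooth (deriv_factor b u j i)"
      using U(3) by (simp add: deriv_factor_def real_smooth_deriv)
    ultimately show "\<exists>U J c u. open U \<and> x0 \<in> U \<and> (\<forall>j i. real_smooth (u j i)) \<and>
        (\<forall>x\<in>U. frechet_derivative h (at x) b = tensor_sum (J :: ('a \<Rightarrow> int) set) c u x)"
      by (intro exI[of _ U] exI[of _ J] exI[of _ c] exI[of _ "deriv_factor b u"]) (use U(1,2) in simp)
  qed
  ultimately show "(\<forall>x. h differentiable (at x)) \<and> (\<forall>b\<in>Basis.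
      locally_tensor_sum (\<lambda>x. frechet_derivative h (at x) b) \<or>
      smooth (\<lambda>x. frechet_derivative h (at x) b))"
    by simp
qed

section \<open>The grid partition of unity\<close>

text \<open>Summing over \<open>grid_near \<delta> x\<close> rather than over all grid points is harmless: the other weights
  vanish at \<open>x\<close> (\<open>grid_weight_eq_0\<close>).\<close>

definition grid_weight :: "real \<Rightarrow> ('a \<Rightarrow> int) \<Rightarrow> 'a::euclidean_space \<Rightarrow> real" where
  "grid_weight \<delta> z x = (\<Prod>i\<in>Basis. smooth_hat (x \<bullet> i / \<delta> - of_int (z i)))"

definition grid_near :: "real \<Rightarrow> 'a::euclidean_space \<Rightarrow> ('a \<Rightarrow> int) set" where
  "grid_near \<delta> x = PiE Basis (\<lambda>i. {\<lfloor>x \<bullet> i / \<delta>\<rfloor> - 1..\<lfloor>x \<bullet> i / \<delta>\<rfloor> + 1})"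

definition quasi_interp :: "real \<Rightarrow> (('a \<Rightarrow> int) \<Rightarrow> real) \<Rightarrow> 'a::euclidean_space \<Rightarrow> real" where
  "quasi_interp \<delta> a x = (\<Sum>z\<in>grid_near \<delta> x. a z * grid_weight \<delta> z x)"

lemma finite_grid_near: "finite (grid_near \<delta> x)"
  by (simp add: grid_near_def finite_PiE)

lemma grid_weight_nonneg: "0 \<le> grid_weight \<delta> z x"
  by (simp add: grid_weight_def prod_nonneg smooth_hat_nonneg)

lemma grid_weight_nonzero_imp:
  "grid_weight \<delta> z x \<noteq> 0 \<Longrightarrow> i \<in> Basis \<Longrightarrow> \<bar>x \<bullet> i / \<delta> - of_int (z i)\<bar> < 1"
  unfolding grid_weight_def using smooth_hat_eq_0 by (metis linorder_not_le prod_zero_iff finite_Basis)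

lemma grid_weight_eq_0:
  assumes "z \<in> PiE Basis (\<lambda>_. UNIV)" "z \<notin> grid_near \<delta> x"
  shows "grid_weight \<delta> z x = 0"
proof (rule ccontr)
  assume nz: "grid_weight \<delta> z x \<noteq> 0"
  have "z i \<in> {\<lfloor>x \<bullet> i / \<delta>\<rfloor> - 1..\<lfloor>x \<bullet> i / \<delta>\<rfloor> + 1}" if "i \<in> Basis" for i
    using grid_weight_nonzero_imp[OF nz that] by (auto simp: abs_less_iff) linarith+
  then have "z \<in> grid_near \<delta> x"
    using assms(1) unfolding grid_near_def by (auto simp: PiE_iff)
  with assms(2) show False by simp
qed

lemma sum_grid_weight: "(\<Sum>z\<in>grid_near \<delta> x. grid_weight \<delta> z x) = 1"
proof -
  have "(\<Sum>z\<in>grid_near \<delta> x. grid_weight \<delta> z x) =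
      (\<Prod>i\<in>Basis. \<Sum>j\<in>{\<lfloor>x \<bullet> i / \<delta>\<rfloor> - 1..\<lfloor>x \<bullet> i / \<delta>\<rfloor> + 1}. smooth_hat (x \<bullet> i / \<delta> - of_int j))"
    unfolding grid_near_def grid_weight_def by (rule prod_sum_PiE[symmetric]) auto
  also have "\<dots> = 1" by (simp add: sum_smooth_hat_translates)
  finally show ?thesis .
qed

lemma quasi_interp_local:
  assumes "\<delta> > 0" "x \<in> ball x0 \<delta>"
  shows "quasi_interp \<delta> a x = tensor_sum (PiE Basis (\<lambda>i. {\<lfloor>x0 \<bullet> i / \<delta>\<rfloor> - 2..\<lfloor>x0 \<bullet> i / \<delta>\<rfloor> + 2})) a
      (\<lambda>z i t. smooth_hat ((1 / \<delta>) * t + (- of_int (z i)))) x"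
proof -
  let ?T = "PiE Basis (\<lambda>i. {\<lfloor>x0 \<bullet> i / \<delta>\<rfloor> - 2..\<lfloor>x0 \<bullet> i / \<delta>\<rfloor> + 2})"
  have "grid_near \<delta> x \<subseteq> ?T"
    unfolding grid_near_def
  proof (rule PiE_mono)
    fix i :: 'a assume i: "i \<in> Basis"
    have "\<bar>x \<bullet> i - x0 \<bullet> i\<bar> < \<delta>"
      using assms(2) Basis_le_norm[OF i, of "x - x0"]
      by (simp add: dist_norm norm_minus_commute inner_diff_left)
    then have "\<bar>x \<bullet> i / \<delta> - x0 \<bullet> i / \<delta>\<bar> < 1"
      using assms(1) by (simp add: diff_divide_distrib[symmetric] abs_divide)
    then show "{\<lfloor>x \<bullet> i / \<delta>\<rfloor> - 1..\<lfloor>x \<bullet> i / \<delta>\<rfloor> + 1} \<subseteq> {\<lfloor>x0 \<bullet> i / \<delta>\<rfloor> - 2..\<lfloor>x0 \<bullet> i / \<delta>\<rfloor> + 2}"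
      by (auto simp: abs_less_iff) linarith+
  qed
  moreover have "?T \<subseteq> PiE Basis (\<lambda>_. UNIV)" by (rule PiE_mono) auto
  ultimately have "quasi_interp \<delta> a x = (\<Sum>z\<in>?T. a z * grid_weight \<delta> z x)"
    unfolding quasi_interp_def
    by (intro sum.mono_neutral_left) (auto simp: finite_PiE grid_weight_eq_0)
  then show ?thesis
    unfolding tensor_sum_def grid_weight_def by simp
qed

lemma smooth_quasi_interp:
  assumes "\<delta> > 0"
  shows "smooth (quasi_interp \<delta> a)"
proof (rule smooth_if_locally_tensor_sum)
  let ?u = "\<lambda>z i t. smooth_hat ((1 / \<delta>) * t + (- of_int (z i)))"
  have u: "\<forall>z i. real_smooth (?u z i)"
    by (intro allI real_smooth_compose_affine real_smooth_smooth_hat)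
  show "locally_tensor_sum (quasi_interp \<delta> a)"
    unfolding locally_tensor_sum_def
  proof
    fix x0 :: 'a
    show "\<exists>U J c u. open U \<and> x0 \<in> U \<and> (\<forall>j i. real_smooth (u j i)) \<and>
        (\<forall>x\<in>U. quasi_interp \<delta> a x = tensor_sum (J :: ('a \<Rightarrow> int) set) c u x)"
      by (intro exI[of _ "ball x0 \<delta>"]
          exI[of _ "PiE Basis (\<lambda>i. {\<lfloor>x0 \<bullet> i / \<delta>\<rfloor> - 2..\<lfloor>x0 \<bullet> i / \<delta>\<rfloor> + 2})"]
          exI[of _ a] exI[of _ ?u])
        (use quasi_interp_local[OF assms] assms u in auto)
  qed
qed

section \<open>Morrey averages\<close>

lemma emeasure_ball_le:
  "emeasure lebesgue (ball (x::'a::euclidean_space) r) \<le>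
    ennreal (r ^ DIM('a)) * emeasure lebesgue (ball (0::'a) 1)"
proof (cases "r \<ge> 0")
  case True
  then show ?thesis using emeasure_lebesgue_ball_conv_unit_ball[OF True, of x] by (metis order_refl)
next
  case False
  then have "ball x r = {}" by simp
  then show ?thesis by (simp del: ball_eq_empty)
qed

lemma powr_add_le:
  fixes a b p :: real
  assumes "0 \<le> a" "0 \<le> b" "0 \<le> p"
  shows "(a + b) powr p \<le> 2 powr p * (a powr p + b powr p)"
proof -
  have "(a + b) powr p \<le> (2 * max a b) powr p"
    using assms by (intro powr_mono2) auto
  also have "\<dots> = 2 powr p * max a b powr p" using assms by (simp add: powr_mult)
  also have "\<dots> \<le> 2 powr p * (a powr p + b powr p)"
    by (intro mult_left_mono) (auto simp: max_def)
  finally show ?thesis .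
qed

lemma morrey_M_le_if_bounded:
  fixes h :: "'a::euclidean_space \<Rightarrow> real"
  assumes "\<And>y. \<bar>h y\<bar> \<le> \<eta>" "0 \<le> p" "r > 0"
  shows "morrey_M p lam h x r \<le>
    ennreal (\<eta> powr p * r powr (real DIM('a) - lam) * measure lebesgue (ball (0::'a) 1))"
proof -
  have "(\<integral>\<^sup>+ y \<in> ball x r. ennreal (\<bar>h y\<bar> powr p) \<partial>lebesgue) \<le>
      (\<integral>\<^sup>+ y. ennreal (\<eta> powr p) * indicator (ball x r) y \<partial>lebesgue)"
    by (intro nn_integral_mono) (auto split: split_indicator intro!: powr_mono2 assms)
  also have "\<dots> = ennreal (\<eta> powr p) * emeasure lebesgue (ball x r)"
    by (rule nn_integral_cmult_indicator) simp
  also have "\<dots> \<le> ennreal (\<eta> powr p) * (ennreal (r ^ DIM('a)) * emeasure lebesgue (ball (0::'a) 1))"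
    by (intro mult_left_mono emeasure_ball_le) simp
  also have "emeasure lebesgue (ball (0::'a) 1) = ennreal (measure lebesgue (ball (0::'a) 1))"
    using emeasure_lborel_ball_finite[of "0::'a" 1] by (simp add: emeasure_eq_ennreal_measure)
  finally have "morrey_M p lam h x r \<le> ennreal (r powr (- lam)) *
      (ennreal (\<eta> powr p) * (ennreal (r ^ DIM('a)) * ennreal (measure lebesgue (ball (0::'a) 1))))"
    unfolding morrey_M_def by (intro mult_left_mono) simp_all
  also have "\<dots> = ennreal (\<eta> powr p * r powr (real DIM('a) - lam) * measure lebesgue (ball (0::'a) 1))"
    using assms(3)
    by (simp add: ennreal_mult' mult_ac powr_realpow[symmetric] powr_diff powr_minus divide_inverse)
  finally show ?thesis .
qed

abbreviation SUP_morrey_M ::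
    "real \<Rightarrow> real \<Rightarrow> ('a::euclidean_space \<Rightarrow> real) \<Rightarrow> real \<Rightarrow> ennreal" where
  "SUP_morrey_M p lam f r \<equiv> SUP x. morrey_M p lam f x r"

lemma SUP_morrey_M_le_if_bounded:
  fixes h :: "'a::euclidean_space \<Rightarrow> real"
  assumes "\<And>y. \<bar>h y\<bar> \<le> \<eta>" "0 \<le> p" "r > 0"
  shows "SUP_morrey_M p lam h r \<le>
    ennreal (\<eta> powr p * r powr (real DIM('a) - lam) * measure lebesgue (ball (0::'a) 1))"
  using morrey_M_le_if_bounded[OF assms] by (rule SUP_least)

lemma morrey_M_diff_le:
  fixes f h :: "'a::euclidean_space \<Rightarrow> real"
  assumes "f \<in> borel_measurable lebesgue" "h \<in> borel_measurable lebesgue" "0 \<le> p"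
  shows "morrey_M p lam (\<lambda>y. f y - h y) x r \<le>
    ennreal (2 powr p) * (morrey_M p lam f x r + morrey_M p lam h x r)"
proof -
  have "(\<integral>\<^sup>+ y \<in> ball x r. ennreal (\<bar>f y - h y\<bar> powr p) \<partial>lebesgue) \<le>
      (\<integral>\<^sup>+ y. ennreal (2 powr p) * (ennreal (\<bar>f y\<bar> powr p) * indicator (ball x r) y +
        ennreal (\<bar>h y\<bar> powr p) * indicator (ball x r) y) \<partial>lebesgue)"
  proof (intro nn_integral_mono)
    fix y
    have "\<bar>f y - h y\<bar> powr p \<le> (\<bar>f y\<bar> + \<bar>h y\<bar>) powr p"
      by (intro powr_mono2 assms) auto
    also have "\<dots> \<le> 2 powr p * (\<bar>f y\<bar> powr p + \<bar>h y\<bar> powr p)"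
      by (intro powr_add_le) (auto simp: assms)
    finally have "ennreal (\<bar>f y - h y\<bar> powr p) \<le>
        ennreal (2 powr p) * (ennreal (\<bar>f y\<bar> powr p) + ennreal (\<bar>h y\<bar> powr p))"
      by (simp add: ennreal_mult[symmetric] ennreal_plus[symmetric] del: ennreal_plus)
    then show "ennreal (\<bar>f y - h y\<bar> powr p) * indicator (ball x r) y \<le>
        ennreal (2 powr p) * (ennreal (\<bar>f y\<bar> powr p) * indicator (ball x r) y +
          ennreal (\<bar>h y\<bar> powr p) * indicator (ball x r) y)"
      by (auto split: split_indicator)
  qed
  also have "\<dots> = ennreal (2 powr p) * ((\<integral>\<^sup>+ y \<in> ball x r. ennreal (\<bar>f y\<bar> powr p) \<partial>lebesgue) +
      (\<integral>\<^sup>+ y \<in> ball x r. ennreal (\<bar>h y\<bar> powr p) \<partial>lebesgue))"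
  proof -
    have "ball x r \<in> sets lebesgue" by simp
    then have "(\<lambda>y. ennreal (\<bar>g y\<bar> powr p) * indicator (ball x r) y) \<in> borel_measurable lebesgue"
      if "g \<in> borel_measurable lebesgue" for g :: "'a \<Rightarrow> real"
      using that by measurable
    with assms(1,2) show ?thesis by (subst nn_integral_cmult) (simp_all add: nn_integral_add)
  qed
  finally have "(\<integral>\<^sup>+ y \<in> ball x r. ennreal (\<bar>f y - h y\<bar> powr p) \<partial>lebesgue) \<le>
      ennreal (2 powr p) * ((\<integral>\<^sup>+ y \<in> ball x r. ennreal (\<bar>f y\<bar> powr p) \<partial>lebesgue) +
        (\<integral>\<^sup>+ y \<in> ball x r. ennreal (\<bar>h y\<bar> powr p) \<partial>lebesgue))" .
  from mult_left_mono[OF this, of "ennreal (r powr - lam)"] show ?thesis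
    unfolding morrey_M_def by (simp add: algebra_simps)
qed

lemma SUP_morrey_M_diff_le:
  fixes f h :: "'a::euclidean_space \<Rightarrow> real"
  assumes "f \<in> borel_measurable lebesgue" "h \<in> borel_measurable lebesgue" "0 \<le> p"
  shows "SUP_morrey_M p lam (\<lambda>y. f y - h y) r \<le>
    ennreal (2 powr p) * (SUP_morrey_M p lam f r + SUP_morrey_M p lam h r)"
proof (rule SUP_least)
  fix x
  have "morrey_M p lam (\<lambda>y. f y - h y) x r \<le>
      ennreal (2 powr p) * (morrey_M p lam f x r + morrey_M p lam h x r)"
    by (rule morrey_M_diff_le[OF assms])
  also have "\<dots> \<le> ennreal (2 powr p) * (SUP_morrey_M p lam f r + SUP_morrey_M p lam h r)"
    by (intro mult_left_mono add_mono SUP_upper) simp_all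
  finally show "morrey_M p lam (\<lambda>y. f y - h y) x r \<le> \<dots>" .
qed

lemma tendsto_SUP_morrey_M_diff:
  fixes f h :: "'a::euclidean_space \<Rightarrow> real"
  assumes "f \<in> borel_measurable lebesgue" "h \<in> borel_measurable lebesgue" "0 \<le> p"
    and "(SUP_morrey_M p lam f \<longlongrightarrow> 0) F"
    and "(SUP_morrey_M p lam h \<longlongrightarrow> 0) F"
  shows "(SUP_morrey_M p lam (\<lambda>y. f y - h y) \<longlongrightarrow> 0) F"
proof (rule tendsto_sandwich[OF _ _ tendsto_const])
  have "((\<lambda>r. ennreal (2 powr p) * (SUP_morrey_M p lam f r + SUP_morrey_M p lam h r))
      \<longlongrightarrow> ennreal (2 powr p) * (0 + 0)) F"
    by (intro ennreal_tendsto_cmult tendsto_add assms(4,5)) simp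
  then show "((\<lambda>r. ennreal (2 powr p) * (SUP_morrey_M p lam f r + SUP_morrey_M p lam h r))
      \<longlongrightarrow> 0) F"
    by simp
qed (use SUP_morrey_M_diff_le[OF assms(1-3)] in auto)

lemma morrey_space_iff:
  "f \<in> morrey_space p lam \<longleftrightarrow> f \<in> borel_measurable lebesgue \<and> morrey_sup p lam f < \<infinity>"
proof safe
  assume meas: "f \<in> borel_measurable lebesgue" and fin: "morrey_sup p lam f < \<infinity>"
  have "(\<integral>\<^sup>+ y \<in> C. ennreal (\<bar>f y\<bar> powr p) \<partial>lebesgue) < \<infinity>" if "compact C" for C :: "'a set"
  proof -
    obtain \<rho> where \<rho>: "\<rho> > 0" "C \<subseteq> ball 0 \<rho>"
      using \<open>compact C\<close> bounded_subset_ballD compact_imp_bounded by blast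
    have "(\<integral>\<^sup>+ y \<in> C. ennreal (\<bar>f y\<bar> powr p) \<partial>lebesgue) \<le>
        (\<integral>\<^sup>+ y \<in> ball 0 \<rho>. ennreal (\<bar>f y\<bar> powr p) \<partial>lebesgue)"
      using \<rho>(2) by (intro nn_integral_mono) (auto split: split_indicator)
    also have "\<dots> = ennreal (\<rho> powr lam) * morrey_M p lam f 0 \<rho>"
      unfolding morrey_M_def using \<rho>(1)
      by (simp add: mult.assoc[symmetric] ennreal_mult[symmetric] powr_minus)
    also have "\<dots> \<le> ennreal (\<rho> powr lam) * morrey_sup p lam f"
      unfolding morrey_sup_def using \<rho>(1)
      by (intro mult_left_mono SUP_upper2[where i="(0, \<rho>)"]) auto
    also have "\<dots> < \<infinity>" using fin by (simp add: ennreal_mult_less_top)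
    finally show ?thesis .
  qed
  with meas fin show "f \<in> morrey_space p lam" by (simp add: morrey_space_def Lp_loc_def)
qed (simp_all add: morrey_space_def Lp_loc_def)

lemma morrey_sup_diff_le:
  fixes f h :: "'a::euclidean_space \<Rightarrow> real"
  assumes "f \<in> borel_measurable lebesgue" "h \<in> borel_measurable lebesgue" "0 \<le> p"
  shows "morrey_sup p lam (\<lambda>y. f y - h y) \<le>
    ennreal (2 powr p) * (morrey_sup p lam f + morrey_sup p lam h)"
  unfolding morrey_sup_def
proof (rule SUP_least)
  fix xr :: "'a \<times> real" assume "xr \<in> UNIV \<times> {0<..}"
  have "morrey_M p lam (\<lambda>y. f y - h y) (fst xr) (snd xr) \<le>
      ennreal (2 powr p) * (morrey_M p lam f (fst xr) (snd xr) + morrey_M p lam h (fst xr) (snd xr))"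
    by (rule morrey_M_diff_le[OF assms])
  also have "\<dots> \<le> ennreal (2 powr p) * ((SUP xr\<in>UNIV \<times> {0<..}. morrey_M p lam f (fst xr) (snd xr)) +
      (SUP xr\<in>UNIV \<times> {0<..}. morrey_M p lam h (fst xr) (snd xr)))"
    using \<open>xr \<in> UNIV \<times> {0<..}\<close> by (intro mult_left_mono add_mono SUP_upper) simp_all
  finally show "morrey_M p lam (\<lambda>y. f y - h y) (fst xr) (snd xr) \<le> \<dots>" .
qed

lemma V0_Vinf_morrey_diff:
  assumes "0 \<le> p" "f \<in> V0_morrey p lam \<inter> Vinf_morrey p lam" "h \<in> V0_morrey p lam \<inter> Vinf_morrey p lam"
  shows "(\<lambda>x. f x - h x) \<in> V0_morrey p lam \<inter> Vinf_morrey p lam"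
proof -
  have meas: "f \<in> borel_measurable lebesgue" "h \<in> borel_measurable lebesgue"
    and fin: "morrey_sup p lam f < \<infinity>" "morrey_sup p lam h < \<infinity>"
    using assms(2,3) by (auto simp: V0_morrey_def morrey_space_iff)
  have "morrey_sup p lam (\<lambda>y. f y - h y) < \<infinity>"
    using morrey_sup_diff_le[OF meas assms(1), of lam] fin
    by (simp add: ennreal_mult_less_top order.strict_trans1)
  then have "(\<lambda>x. f x - h x) \<in> morrey_space p lam"
    using meas by (simp add: morrey_space_iff)
  with assms show ?thesis
    unfolding V0_morrey_def Vinf_morrey_def by (auto intro: tendsto_SUP_morrey_M_diff[OF meas assms(1)])
qed

lemma morrey_norm_less:
  assumes "\<And>x r. r > 0 \<Longrightarrow> morrey_M p lam h x r \<le> ennreal e"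
    and "0 \<le> e" "e < \<epsilon> powr p" "\<epsilon> > 0" "p > 0"
  shows "morrey_norm p lam h < \<epsilon>"
proof -
  have "morrey_sup p lam h \<le> ennreal e"
    unfolding morrey_sup_def using assms(1) by (auto intro: SUP_least)
  then have "enn2real (morrey_sup p lam h) \<le> enn2real (ennreal e)" by (intro enn2real_mono) simp_all
  then have "enn2real (morrey_sup p lam h) \<le> e" using assms(2) by simp
  then have "morrey_norm p lam h \<le> e powr (1 / p)"
    unfolding morrey_norm_def using assms(5) by (intro powr_mono2) auto
  also have "\<dots> < (\<epsilon> powr p) powr (1 / p)"
    using assms by (intro powr_less_mono2) auto
  also have "\<dots> = \<epsilon>" using assms(4,5) by (simp add: powr_powr)
  finally show ?thesis .
qed

section \<open>The grid approximant\<close>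

lemma norm_le_DIM_mult:
  fixes v :: "'a::euclidean_space"
  assumes "\<And>i. i \<in> Basis \<Longrightarrow> \<bar>v \<bullet> i\<bar> \<le> c"
  shows "norm v \<le> real DIM('a) * c"
proof -
  have "norm v \<le> (\<Sum>i\<in>Basis. \<bar>v \<bullet> i\<bar>)" by (rule norm_le_l1)
  also have "\<dots> \<le> (\<Sum>i\<in>(Basis::'a set). c)" using assms by (intro sum_mono)
  finally show ?thesis by simp
qed

lemma bounds_if_abs_divide_diff_less_1:
  fixes a b \<delta> :: real
  assumes "\<delta> > 0" "\<bar>a / \<delta> - b\<bar> < 1"
  shows "\<delta> * (b - 1) < a \<and> a < \<delta> * (b + 1)"
proof -
  have "b - 1 < a / \<delta>" "a / \<delta> < b + 1" using assms(2) by (auto simp: abs_less_iff)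
  then show ?thesis using assms(1) by (simp add: field_simps)
qed

definition grid_point :: "real \<Rightarrow> ('a \<Rightarrow> int) \<Rightarrow> real \<Rightarrow> 'a::euclidean_space" where
  "grid_point \<delta> z s = (\<Sum>i\<in>Basis. (\<delta> * (of_int (z i) + s)) *\<^sub>R i)"

lemma grid_point_inner: "j \<in> Basis \<Longrightarrow> grid_point \<delta> z s \<bullet> j = \<delta> * (of_int (z j) + s)"
  unfolding grid_point_def
  by (simp add: inner_sum_left inner_Basis if_distrib if_distribR sum.delta cong: if_cong)

definition grid_cell :: "real \<Rightarrow> ('a \<Rightarrow> int) \<Rightarrow> 'a::euclidean_space set" where
  "grid_cell \<delta> z = cbox (grid_point \<delta> z 0) (grid_point \<delta> z 1)"

definition grid_cell_open :: "real \<Rightarrow> ('a \<Rightarrow> int) \<Rightarrow> 'a::euclidean_space set" where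
  "grid_cell_open \<delta> z = box (grid_point \<delta> z 0) (grid_point \<delta> z 1)"

definition grid_box :: "real \<Rightarrow> ('a \<Rightarrow> int) \<Rightarrow> 'a::euclidean_space set" where
  "grid_box \<delta> z = box (grid_point \<delta> z (-1)) (grid_point \<delta> z 1)"

lemma mem_grid_cell:
  "y \<in> grid_cell \<delta> z \<longleftrightarrow> (\<forall>i\<in>Basis. \<delta> * of_int (z i) \<le> y \<bullet> i \<and> y \<bullet> i \<le> \<delta> * (of_int (z i) + 1))"
  by (simp add: grid_cell_def mem_box grid_point_inner)

lemma mem_grid_cell_open:
  "y \<in> grid_cell_open \<delta> z \<longleftrightarrow> (\<forall>i\<in>Basis. \<delta> * of_int (z i) < y \<bullet> i \<and> y \<bullet> i < \<delta> * (of_int (z i) + 1))"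
  by (simp add: grid_cell_open_def mem_box grid_point_inner)

lemma mem_grid_box:
  "y \<in> grid_box \<delta> z \<longleftrightarrow>
    (\<forall>i\<in>Basis. \<delta> * (of_int (z i) - 1) < y \<bullet> i \<and> y \<bullet> i < \<delta> * (of_int (z i) + 1))"
  by (simp add: grid_box_def mem_box grid_point_inner)

lemma grid_cell_open_subset: "grid_cell_open \<delta> z \<subseteq> grid_cell \<delta> z"
  by (auto simp: mem_grid_cell_open mem_grid_cell less_imp_le)

lemma grid_cell_open_sets [measurable]: "grid_cell_open \<delta> (z::'a::euclidean_space \<Rightarrow> int) \<in> sets lebesgue"
  unfolding grid_cell_open_def by (intro sets_completionI_sets) (simp add: borel_open)

lemma grid_box_sets [measurable]: "grid_box \<delta> (z::'a::euclidean_space \<Rightarrow> int) \<in> sets lebesgue"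
  unfolding grid_box_def by (intro sets_completionI_sets) (simp add: borel_open)

lemma emeasure_grid_box:
  assumes "\<delta> > 0"
  shows "emeasure lebesgue (grid_box \<delta> (z :: 'a \<Rightarrow> int)) =
    ennreal (2 ^ DIM('a::euclidean_space)) * emeasure lebesgue (grid_cell_open \<delta> z)"
  using assms unfolding grid_box_def grid_cell_open_def
  by (simp add: emeasure_lborel_box_eq grid_point_inner inner_diff_left prod_constant prod_ennreal
      power_mult_distrib ennreal_mult' algebra_simps)

lemma grid_cell_open_unique:
  assumes "\<delta> > 0" "z \<in> PiE Basis (\<lambda>_. UNIV)" "z' \<in> PiE Basis (\<lambda>_. UNIV)"
    "w \<in> grid_cell_open \<delta> z" "w \<in> grid_cell_open \<delta> z'"
  shows "z = z'"
proof
  fix i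
  have floor_eq: "z i = \<lfloor>w \<bullet> i / \<delta>\<rfloor>" if "w \<in> grid_cell_open \<delta> z" "i \<in> Basis" for z :: "'a \<Rightarrow> int"
  proof -
    have "\<delta> * of_int (z i) < w \<bullet> i" "w \<bullet> i < \<delta> * (of_int (z i) + 1)"
      using that by (auto simp: mem_grid_cell_open)
    then have "of_int (z i) < w \<bullet> i / \<delta>" "w \<bullet> i / \<delta> < of_int (z i) + 1"
      using assms(1) by (simp_all add: field_simps)
    then show ?thesis by (intro floor_unique[symmetric]) auto
  qed
  show "z i = z' i"
  proof (cases "i \<in> Basis")
    case True
    then show ?thesis using floor_eq[OF assms(4)] floor_eq[OF assms(5)] by simp
  qed (use assms(2,3) in \<open>auto simp: PiE_def extensional_def\<close>)
qed

lemma grid_weight_nonzero_imp_mem_grid_box: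
  assumes "\<delta> > 0" "grid_weight \<delta> z y \<noteq> 0"
  shows "y \<in> grid_box \<delta> z"
  unfolding mem_grid_box
  using bounds_if_abs_divide_diff_less_1[OF assms(1) grid_weight_nonzero_imp[OF assms(2)]] by auto

lemma dist_le_if_grid_weight_nonzero:
  fixes y :: "'a::euclidean_space"
  assumes "\<delta> > 0" "grid_weight \<delta> z y \<noteq> 0" "w \<in> grid_cell \<delta> z"
  shows "dist y w \<le> real DIM('a) * (2 * \<delta>)"
proof -
  have "\<bar>(y - w) \<bullet> i\<bar> \<le> 2 * \<delta>" if "i \<in> Basis" for i
    using grid_weight_nonzero_imp_mem_grid_box[OF assms(1,2)] assms(3) that
    by (force simp: mem_grid_box mem_grid_cell inner_diff_left abs_le_iff algebra_simps)
  then show ?thesis unfolding dist_norm by (rule norm_le_DIM_mult)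
qed

lemma diff_quasi_interp:
  "f y - quasi_interp \<delta> a y = (\<Sum>z\<in>grid_near \<delta> y. grid_weight \<delta> z y * (f y - a z))"
proof -
  have "(\<Sum>z\<in>grid_near \<delta> y. grid_weight \<delta> z y * (f y - a z)) =
      (\<Sum>z\<in>grid_near \<delta> y. grid_weight \<delta> z y) * f y - quasi_interp \<delta> a y"
    unfolding quasi_interp_def
    by (simp add: right_diff_distrib sum_subtractf sum_distrib_left mult.commute)
  then show ?thesis by (simp add: sum_grid_weight)
qed

text \<open>A minimiser of \<open>\<bar>f\<bar>\<close> on the cell exists for continuous \<open>f\<close> and \<open>\<delta> > 0\<close>
  (\<open>cell_argmin_minimizes\<close>); otherwise \<open>SOME\<close> yields an arbitrary point.\<close>

definition cell_argmin :: "('a::euclidean_space \<Rightarrow> real) \<Rightarrow> real \<Rightarrow> ('a \<Rightarrow> int) \<Rightarrow> 'a" where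
  "cell_argmin f \<delta> z = (SOME y. y \<in> grid_cell \<delta> z \<and> (\<forall>w\<in>grid_cell \<delta> z. \<bar>f y\<bar> \<le> \<bar>f w\<bar>))"

definition cell_min :: "('a::euclidean_space \<Rightarrow> real) \<Rightarrow> real \<Rightarrow> ('a \<Rightarrow> int) \<Rightarrow> real" where
  "cell_min f \<delta> z = f (cell_argmin f \<delta> z)"

definition grid_approx :: "('a::euclidean_space \<Rightarrow> real) \<Rightarrow> real \<Rightarrow> 'a \<Rightarrow> real" where
  "grid_approx f \<delta> = quasi_interp \<delta> (cell_min f \<delta>)"

lemma cell_argmin_minimizes:
  assumes "continuous_on UNIV f" "\<delta> > 0"
  shows "cell_argmin f \<delta> z \<in> grid_cell \<delta> z \<and>
    (\<forall>w\<in>grid_cell \<delta> z. \<bar>f (cell_argmin f \<delta> z)\<bar> \<le> \<bar>f w\<bar>)"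
proof -
  have "grid_cell \<delta> z \<noteq> {}"
    using assms(2) unfolding grid_cell_def by (auto simp: box_ne_empty grid_point_inner)
  then have "\<exists>y\<in>grid_cell \<delta> z. \<forall>w\<in>grid_cell \<delta> z. \<bar>f y\<bar> \<le> \<bar>f w\<bar>"
    by (intro continuous_attains_inf)
      (auto simp: grid_cell_def intro!: continuous_intros continuous_on_subset[OF assms(1)])
  then have "\<exists>y. y \<in> grid_cell \<delta> z \<and> (\<forall>w\<in>grid_cell \<delta> z. \<bar>f y\<bar> \<le> \<bar>f w\<bar>)" by blast
  then show ?thesis unfolding cell_argmin_def by (rule someI_ex)
qed

lemma smooth_grid_approx: "\<delta> > 0 \<Longrightarrow> smooth (grid_approx f \<delta>)"
  unfolding grid_approx_def by (rule smooth_quasi_interp)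

lemma grid_approx_close:
  fixes f :: "'a::euclidean_space \<Rightarrow> real"
  assumes "continuous_on UNIV f" "\<delta> > 0"
    and "\<And>u w. dist u w \<le> real DIM('a) * (2 * \<delta>) \<Longrightarrow> \<bar>f u - f w\<bar> \<le> \<eta>"
  shows "\<bar>f y - grid_approx f \<delta> y\<bar> \<le> \<eta>"
proof -
  have near: "\<bar>grid_weight \<delta> z y * (f y - cell_min f \<delta> z)\<bar> \<le> grid_weight \<delta> z y * \<eta>" for z
  proof (cases "grid_weight \<delta> z y = 0")
    case False
    then have "dist y (cell_argmin f \<delta> z) \<le> real DIM('a) * (2 * \<delta>)"
      using cell_argmin_minimizes[OF assms(1,2)]
      by (intro dist_le_if_grid_weight_nonzero[OF assms(2)]) auto
    then have "\<bar>f y - cell_min f \<delta> z\<bar> \<le> \<eta>" unfolding cell_min_def by (rule assms(3))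
    then show ?thesis by (simp add: abs_mult grid_weight_nonneg mult_left_mono)
  qed simp
  have "\<bar>f y - grid_approx f \<delta> y\<bar> \<le> (\<Sum>z\<in>grid_near \<delta> y. \<bar>grid_weight \<delta> z y * (f y - cell_min f \<delta> z)\<bar>)"
    unfolding grid_approx_def diff_quasi_interp by (rule sum_abs)
  also have "\<dots> \<le> (\<Sum>z\<in>grid_near \<delta> y. grid_weight \<delta> z y * \<eta>)"
    by (intro sum_mono near)
  also have "\<dots> = \<eta>" by (simp add: sum_distrib_right[symmetric] sum_grid_weight)
  finally show ?thesis .
qed

definition grid_cover :: "'a::euclidean_space \<Rightarrow> real \<Rightarrow> real \<Rightarrow> ('a \<Rightarrow> int) set" where
  "grid_cover x r \<delta> = PiE Basis (\<lambda>i. {\<lfloor>(x \<bullet> i - r) / \<delta>\<rfloor> - 1..\<lceil>(x \<bullet> i + r) / \<delta>\<rceil> + 1})"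

lemma finite_grid_cover: "finite (grid_cover x r \<delta>)"
  by (simp add: grid_cover_def finite_PiE)

lemma abs_quasi_interp_le_active_coeff:
  obtains z0 where "z0 \<in> grid_near \<delta> y" "grid_weight \<delta> z0 y \<noteq> 0"
    "\<bar>quasi_interp \<delta> a y\<bar> \<le> \<bar>a z0\<bar>"
proof -
  define N where "N = {z\<in>grid_near \<delta> y. grid_weight \<delta> z y \<noteq> 0}"
  have fin: "finite N" unfolding N_def using finite_grid_near[of \<delta> y] by simp
  have "N \<noteq> {}"
  proof
    assume "N = {}"
    then have "(\<Sum>z\<in>grid_near \<delta> y. grid_weight \<delta> z y) = 0" unfolding N_def by (auto intro: sum.neutral)
    then show False by (simp add: sum_grid_weight)
  qed
  then have "Max ((\<lambda>z. \<bar>a z\<bar>) ` N) \<in> (\<lambda>z. \<bar>a z\<bar>) ` N" using fin by (intro Max_in) auto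
  then obtain z0 where "z0 \<in> N" "\<bar>a z0\<bar> = Max ((\<lambda>z. \<bar>a z\<bar>) ` N)" by auto
  with fin have z0: "z0 \<in> N" "\<And>z. z \<in> N \<Longrightarrow> \<bar>a z\<bar> \<le> \<bar>a z0\<bar>" by auto
  have "\<bar>quasi_interp \<delta> a y\<bar> \<le> (\<Sum>z\<in>grid_near \<delta> y. \<bar>a z0\<bar> * grid_weight \<delta> z y)"
    unfolding quasi_interp_def
  proof (rule order_trans[OF sum_abs sum_mono])
    fix z assume "z \<in> grid_near \<delta> y"
    then show "\<bar>a z * grid_weight \<delta> z y\<bar> \<le> \<bar>a z0\<bar> * grid_weight \<delta> z y"
      using z0(2)[of z] grid_weight_nonneg[of \<delta> z y] unfolding N_def
      by (cases "grid_weight \<delta> z y = 0") (auto simp: abs_mult mult_right_mono)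
  qed
  also have "\<dots> = \<bar>a z0\<bar>" by (simp add: sum_distrib_left[symmetric] sum_grid_weight)
  finally show ?thesis using z0(1) that unfolding N_def by blast
qed

lemma grid_weight_nonzero_imp_mem_grid_cover:
  assumes "\<delta> > 0" "y \<in> ball x r" "z \<in> grid_near \<delta> y" "grid_weight \<delta> z y \<noteq> 0"
  shows "z \<in> grid_cover x r \<delta>"
proof -
  have "z i \<in> {\<lfloor>(x \<bullet> i - r) / \<delta>\<rfloor> - 1..\<lceil>(x \<bullet> i + r) / \<delta>\<rceil> + 1}" if i: "i \<in> Basis" for i
  proof -
    have z: "\<delta> * (of_int (z i) - 1) < y \<bullet> i" "y \<bullet> i < \<delta> * (of_int (z i) + 1)"
      using grid_weight_nonzero_imp_mem_grid_box[OF assms(1,4)] i by (auto simp: mem_grid_box)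
    have "\<bar>(y - x) \<bullet> i\<bar> < r"
      using Basis_le_norm[OF i, of "y - x"] assms(2) by (simp add: dist_norm norm_minus_commute)
    then have "x \<bullet> i - r < y \<bullet> i" "y \<bullet> i < x \<bullet> i + r" by (auto simp: inner_diff_left abs_less_iff)
    with z assms(1) have "(x \<bullet> i - r) / \<delta> < of_int (z i) + 1" "of_int (z i) - 1 < (x \<bullet> i + r) / \<delta>"
      by (simp_all add: field_simps)
    then show ?thesis by simp linarith
  qed
  with assms(3) show ?thesis by (auto simp: grid_cover_def grid_near_def PiE_iff)
qed

lemma quasi_interp_powr_le_sum_grid_box:
  assumes "\<delta> > 0" "y \<in> ball x r" "0 \<le> p"
  shows "ennreal (\<bar>quasi_interp \<delta> a y\<bar> powr p) \<le>
    (\<Sum>z\<in>grid_cover x r \<delta>. ennreal (\<bar>a z\<bar> powr p) * indicator (grid_box \<delta> z) y)"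
proof -
  obtain z0 where z0: "z0 \<in> grid_near \<delta> y" "grid_weight \<delta> z0 y \<noteq> 0"
    "\<bar>quasi_interp \<delta> a y\<bar> \<le> \<bar>a z0\<bar>"
    by (rule abs_quasi_interp_le_active_coeff)
  moreover have "y \<in> grid_box \<delta> z0" by (rule grid_weight_nonzero_imp_mem_grid_box[OF assms(1) z0(2)])
  ultimately have "ennreal (\<bar>quasi_interp \<delta> a y\<bar> powr p) \<le>
      ennreal (\<bar>a z0\<bar> powr p) * indicator (grid_box \<delta> z0) y"
    using assms(3) by (simp add: powr_mono2)
  also have "\<dots> \<le> (\<Sum>z\<in>grid_cover x r \<delta>. ennreal (\<bar>a z\<bar> powr p) * indicator (grid_box \<delta> z) y)"
    using grid_weight_nonzero_imp_mem_grid_cover[OF assms(1,2) z0(1,2)]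
    by (intro member_le_sum finite_grid_cover) simp_all
  finally show ?thesis .
qed

lemma mem_ball_if_mem_grid_cell_open:
  fixes x :: "'a::euclidean_space"
  assumes "0 < \<delta>" "\<delta> \<le> r" "z \<in> grid_cover x r \<delta>" "w \<in> grid_cell_open \<delta> z"
  shows "w \<in> ball x (5 * real DIM('a) * r)"
proof -
  have "\<bar>(w - x) \<bullet> i\<bar> \<le> 4 * r" if i: "i \<in> Basis" for i
  proof -
    have "\<lfloor>(x \<bullet> i - r) / \<delta>\<rfloor> - 1 \<le> z i" "z i \<le> \<lceil>(x \<bullet> i + r) / \<delta>\<rceil> + 1"
      using assms(3) i unfolding grid_cover_def by (auto simp: PiE_iff)
    then have "(x \<bullet> i - r) / \<delta> - 2 < of_int (z i)" "of_int (z i) < (x \<bullet> i + r) / \<delta> + 2"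
      by linarith+
    then have "x \<bullet> i - r - 2 * \<delta> < \<delta> * of_int (z i)" "\<delta> * of_int (z i) < x \<bullet> i + r + 2 * \<delta>"
      using assms(1) by (simp_all add: field_simps)
    moreover have "\<delta> * of_int (z i) < w \<bullet> i" "w \<bullet> i < \<delta> * (of_int (z i) + 1)"
      using assms(4) i by (auto simp: mem_grid_cell_open)
    ultimately show ?thesis using assms(2) by (simp add: inner_diff_left abs_le_iff algebra_simps)
  qed
  then have "norm (w - x) \<le> real DIM('a) * (4 * r)" by (rule norm_le_DIM_mult)
  also have "\<dots> < 5 * real DIM('a) * r" using assms(1,2) by simp
  finally show ?thesis by (simp add: dist_norm norm_minus_commute)
qed

lemma sum_indicator_grid_cell_open_le:
  fixes x :: "'a::euclidean_space"
  assumes "0 < \<delta>" "\<delta> \<le> r"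
  shows "(\<Sum>z\<in>grid_cover x r \<delta>. c * indicator (grid_cell_open \<delta> z) w) \<le>
    (c::ennreal) * indicator (ball x (5 * real DIM('a) * r)) w"
proof (cases "\<exists>z0\<in>grid_cover x r \<delta>. w \<in> grid_cell_open \<delta> z0")
  case True
  then obtain z0 where z0: "z0 \<in> grid_cover x r \<delta>" "w \<in> grid_cell_open \<delta> z0" by blast
  have "grid_cover x r \<delta> \<subseteq> PiE Basis (\<lambda>_. UNIV)" unfolding grid_cover_def by (rule PiE_mono) auto
  then have "w \<notin> grid_cell_open \<delta> z" if "z \<in> grid_cover x r \<delta> - {z0}" for z
    using grid_cell_open_unique[OF assms(1), of z z0 w] that z0 by auto
  then have "(\<Sum>z\<in>grid_cover x r \<delta>. c * indicator (grid_cell_open \<delta> z) w) = c"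
    using z0 by (simp add: sum.remove[OF finite_grid_cover z0(1)] sum.neutral)
  then show ?thesis using mem_ball_if_mem_grid_cell_open[OF assms z0] by simp
qed (simp add: sum.neutral)

text \<open>The cells \<open>z \<in> grid_cover x r \<delta>\<close> are disjoint and lie in \<open>B(x, 5nr)\<close>, and the box of \<open>z\<close> is
  \<open>2\<^sup>n\<close> times larger than its cell, on which \<open>\<bar>f\<bar> \<ge> \<bar>cell_min f \<delta> z\<bar>\<close>.\<close>

lemma nn_integral_grid_approx_le:
  fixes f :: "'a::euclidean_space \<Rightarrow> real"
  assumes "continuous_on UNIV f" "f \<in> borel_measurable lebesgue" "0 < \<delta>" "\<delta> \<le> r" "0 \<le> p"
  shows "(\<integral>\<^sup>+ y \<in> ball x r. ennreal (\<bar>grid_approx f \<delta> y\<bar> powr p) \<partial>lebesgue) \<le>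
    ennreal (2 ^ DIM('a)) * (\<integral>\<^sup>+ y \<in> ball x (5 * real DIM('a) * r). ennreal (\<bar>f y\<bar> powr p) \<partial>lebesgue)"
proof -
  let ?a = "cell_min f \<delta>" and ?Z = "grid_cover x r \<delta>"
  have cell: "ennreal (\<bar>?a z\<bar> powr p) * emeasure lebesgue (grid_cell_open \<delta> z) \<le>
      (\<integral>\<^sup>+ y. ennreal (\<bar>f y\<bar> powr p) * indicator (grid_cell_open \<delta> z) y \<partial>lebesgue)" for z
  proof -
    have "\<bar>?a z\<bar> \<le> \<bar>f y\<bar>" if "y \<in> grid_cell_open \<delta> z" for y
      using cell_argmin_minimizes[OF assms(1,3), of z] grid_cell_open_subset that
      unfolding cell_min_def by blast
    then have "(\<integral>\<^sup>+ y. ennreal (\<bar>?a z\<bar> powr p) * indicator (grid_cell_open \<delta> z) y \<partial>lebesgue) \<le>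
        (\<integral>\<^sup>+ y. ennreal (\<bar>f y\<bar> powr p) * indicator (grid_cell_open \<delta> z) y \<partial>lebesgue)"
      using assms(5) by (intro nn_integral_mono) (auto split: split_indicator intro: powr_mono2)
    then show ?thesis by (simp add: nn_integral_cmult_indicator)
  qed
  have "(\<integral>\<^sup>+ y \<in> ball x r. ennreal (\<bar>grid_approx f \<delta> y\<bar> powr p) \<partial>lebesgue) \<le>
      (\<integral>\<^sup>+ y. (\<Sum>z\<in>?Z. ennreal (\<bar>?a z\<bar> powr p) * indicator (grid_box \<delta> z) y) \<partial>lebesgue)"
    unfolding grid_approx_def using quasi_interp_powr_le_sum_grid_box[OF assms(3) _ assms(5)]
    by (intro nn_integral_mono) (auto split: split_indicator)
  also have "\<dots> = (\<Sum>z\<in>?Z. ennreal (\<bar>?a z\<bar> powr p) * emeasure lebesgue (grid_box \<delta> z))"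
    by (simp add: nn_integral_sum nn_integral_cmult_indicator)
  also have "\<dots> \<le> (\<Sum>z\<in>?Z. ennreal (2 ^ DIM('a)) *
      (\<integral>\<^sup>+ y. ennreal (\<bar>f y\<bar> powr p) * indicator (grid_cell_open \<delta> z) y \<partial>lebesgue))"
    using cell
    by (intro sum_mono) (simp add: emeasure_grid_box[OF assms(3)] mult.left_commute mult_left_mono)
  also have "\<dots> = ennreal (2 ^ DIM('a)) *
      (\<integral>\<^sup>+ y. (\<Sum>z\<in>?Z. ennreal (\<bar>f y\<bar> powr p) * indicator (grid_cell_open \<delta> z) y) \<partial>lebesgue)"
    using assms(2) by (simp add: nn_integral_sum sum_distrib_left)
  also have "\<dots> \<le> ennreal (2 ^ DIM('a)) *
      (\<integral>\<^sup>+ y \<in> ball x (5 * real DIM('a) * r). ennreal (\<bar>f y\<bar> powr p) \<partial>lebesgue)"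
    by (intro mult_left_mono nn_integral_mono sum_indicator_grid_cell_open_le assms(3,4)) simp
  finally show ?thesis .
qed

lemma smooth_borel_measurable:
  fixes g :: "'a::euclidean_space \<Rightarrow> real"
  assumes "smooth g"
  shows "g \<in> borel_measurable lebesgue"
proof -
  have "continuous_on UNIV g"
    using assms by (auto elim!: smooth.cases
        intro!: differentiable_imp_continuous_on differentiable_at_imp_differentiable_on)
  then show ?thesis
    by (intro measurable_completion) (simp add: borel_measurable_continuous_onI)
qed

lemma grid_approx_borel_measurable: "0 < \<delta> \<Longrightarrow> grid_approx f \<delta> \<in> borel_measurable lebesgue"
  by (intro smooth_borel_measurable smooth_grid_approx)

lemma morrey_M_grid_approx_le:
  fixes f :: "'a::euclidean_space \<Rightarrow> real"
  assumes "continuous_on UNIV f" "f \<in> borel_measurable lebesgue" "0 < \<delta>" "\<delta> \<le> r" "0 \<le> p"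
  shows "morrey_M p lam (grid_approx f \<delta>) x r \<le>
    ennreal (2 ^ DIM('a) * (5 * real DIM('a)) powr lam) * morrey_M p lam f x (5 * real DIM('a) * r)"
proof -
  define K where "K = 5 * real DIM('a)"
  have K: "K > 0" and r: "r > 0" using assms(3,4) unfolding K_def by auto
  have "morrey_M p lam (grid_approx f \<delta>) x r \<le> ennreal (r powr (- lam)) *
      (ennreal (2 ^ DIM('a)) * (\<integral>\<^sup>+ y \<in> ball x (K * r). ennreal (\<bar>f y\<bar> powr p) \<partial>lebesgue))"
    unfolding morrey_M_def K_def
    using nn_integral_grid_approx_le[OF assms] by (intro mult_left_mono) (auto simp: mult.assoc)
  also have "r powr (- lam) = K powr lam * (K * r) powr (- lam)"
    using K r by (simp add: powr_mult powr_minus field_simps)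
  then have "ennreal (r powr (- lam)) *
      (ennreal (2 ^ DIM('a)) * (\<integral>\<^sup>+ y \<in> ball x (K * r). ennreal (\<bar>f y\<bar> powr p) \<partial>lebesgue)) =
      ennreal (2 ^ DIM('a) * K powr lam) * morrey_M p lam f x (K * r)"
    unfolding morrey_M_def using K r by (simp add: ennreal_mult' ennreal_mult mult_ac)
  finally show ?thesis unfolding K_def .
qed

lemma morrey_M_grid_approx_error_le:
  fixes f :: "'a::euclidean_space \<Rightarrow> real"
  assumes "continuous_on UNIV f" "f \<in> borel_measurable lebesgue" "0 < \<delta>" "\<delta> \<le> r" "0 \<le> p"
  shows "morrey_M p lam (\<lambda>y. f y - grid_approx f \<delta> y) x r \<le>
    ennreal (2 powr p) * (morrey_M p lam f x r +
      ennreal (2 ^ DIM('a) * (5 * real DIM('a)) powr lam) * morrey_M p lam f x (5 * real DIM('a) * r))"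
proof -
  from morrey_M_diff_le[OF assms(2) grid_approx_borel_measurable[OF assms(3)] assms(5)] show ?thesis
    by (rule order_trans) (intro mult_left_mono add_left_mono morrey_M_grid_approx_le[OF assms]; simp)
qed

section \<open>Approximation in \<open>V\<^sub>0 \<inter> V\<^sub>\<infinity>\<close>\<close>

lemma eventually_grid_approx_close:
  fixes f :: "'a::euclidean_space \<Rightarrow> real"
  assumes "uniformly_continuous_on UNIV f" "\<eta> > 0"
  shows "\<forall>\<^sub>F \<delta> in at_right 0. \<forall>y. \<bar>f y - grid_approx f \<delta> y\<bar> \<le> \<eta>"
proof -
  obtain d where d: "d > 0" "\<And>u w. dist u w < d \<Longrightarrow> dist (f u) (f w) < \<eta>"
    using assms unfolding uniformly_continuous_on_def by blast
  have "\<forall>\<^sub>F \<delta> in at_right 0. 0 < \<delta> \<and> \<delta> < d / (2 * real DIM('a))"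
    using d(1)
    by (intro eventually_conj eventually_at_right_less order_tendstoD(2)[OF tendsto_ident_at]) simp
  then show ?thesis
  proof eventually_elim
    case (elim \<delta>)
    then have "\<bar>f u - f w\<bar> \<le> \<eta>" if "dist u w \<le> real DIM('a) * (2 * \<delta>)" for u w
      using d(2)[of u w] that by (simp add: dist_real_def field_simps)
    then show ?case
      using uniformly_continuous_imp_continuous[OF assms(1)] elim by (intro allI grid_approx_close) auto
  qed
qed

lemma SUP_morrey_M_grid_approx_error_le:
  fixes f :: "'a::euclidean_space \<Rightarrow> real"
  assumes "continuous_on UNIV f" "f \<in> borel_measurable lebesgue" "0 < \<delta>" "\<delta> \<le> r" "0 \<le> p"
  shows "SUP_morrey_M p lam (\<lambda>y. f y - grid_approx f \<delta> y) r \<le>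
    ennreal (2 powr p) * (SUP_morrey_M p lam f r +
      ennreal (2 ^ DIM('a) * (5 * real DIM('a)) powr lam) * SUP_morrey_M p lam f (5 * real DIM('a) * r))"
proof (rule SUP_least)
  fix x
  have "morrey_M p lam (\<lambda>y. f y - grid_approx f \<delta> y) x r \<le>
    ennreal (2 powr p) * (morrey_M p lam f x r +
      ennreal (2 ^ DIM('a) * (5 * real DIM('a)) powr lam) * morrey_M p lam f x (5 * real DIM('a) * r))"
    by (rule morrey_M_grid_approx_error_le[OF assms])
  also have "\<dots> \<le> ennreal (2 powr p) * (SUP_morrey_M p lam f r +
      ennreal (2 ^ DIM('a) * (5 * real DIM('a)) powr lam) * SUP_morrey_M p lam f (5 * real DIM('a) * r))"
    by (intro mult_left_mono add_mono SUP_upper) simp_all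
  finally show "morrey_M p lam (\<lambda>y. f y - grid_approx f \<delta> y) x r \<le> \<dots>" .
qed

lemma SUP_morrey_M_le_morrey_sup: "r > 0 \<Longrightarrow> SUP_morrey_M p lam f r \<le> morrey_sup p lam f"
  unfolding morrey_sup_def by (intro SUP_least SUP_upper2[where i="(_, r)"]) auto

lemma morrey_sup_le_max:
  assumes "\<And>r. 0 < r \<Longrightarrow> r \<le> \<delta> \<Longrightarrow> SUP_morrey_M p lam h r \<le> B\<^sub>1"
    and "\<And>r. \<delta> \<le> r \<Longrightarrow> SUP_morrey_M p lam h r \<le> B\<^sub>2"
  shows "morrey_sup p lam h \<le> max B\<^sub>1 B\<^sub>2"
  unfolding morrey_sup_def
proof (rule SUP_least, clarsimp)
  fix x and r :: real assume "r > 0"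
  then have "SUP_morrey_M p lam h r \<le> max B\<^sub>1 B\<^sub>2"
    using assms by (cases "r \<le> \<delta>") (auto simp: le_max_iff_disj)
  then show "morrey_M p lam h x r \<le> max B\<^sub>1 B\<^sub>2" by (rule order_trans[OF SUP_upper, rotated]) simp
qed

lemma grid_approx_error_morrey_space:
  fixes f :: "'a::euclidean_space \<Rightarrow> real"
  assumes lam: "lam < real DIM('a)" and p: "0 \<le> p" and f: "f \<in> morrey_space p lam"
    and cont: "continuous_on UNIV f" and \<delta>: "0 < \<delta>" and close: "\<And>y. \<bar>f y - grid_approx f \<delta> y\<bar> \<le> \<eta>"
  shows "(\<lambda>y. f y - grid_approx f \<delta> y) \<in> morrey_space p lam"
proof -
  let ?c = "2 ^ DIM('a) * (5 * real DIM('a)) powr lam"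
  have meas: "f \<in> borel_measurable lebesgue" and fin: "morrey_sup p lam f < \<infinity>"
    using f by (simp_all add: morrey_space_iff)
  have "morrey_sup p lam (\<lambda>y. f y - grid_approx f \<delta> y) \<le>
      max (ennreal (\<eta> powr p * \<delta> powr (real DIM('a) - lam) * measure lebesgue (ball (0::'a) 1)))
        (ennreal (2 powr p) * (morrey_sup p lam f + ennreal ?c * morrey_sup p lam f))"
  proof (rule morrey_sup_le_max)
    fix r assume "0 < r" "r \<le> \<delta>"
    then have "\<eta> powr p * r powr (real DIM('a) - lam) * measure lebesgue (ball (0::'a) 1) \<le>
        \<eta> powr p * \<delta> powr (real DIM('a) - lam) * measure lebesgue (ball (0::'a) 1)"
      using lam by (intro mult_right_mono mult_left_mono powr_mono2) auto
    then show "SUP_morrey_M p lam (\<lambda>y. f y - grid_approx f \<delta> y) r \<le>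
        ennreal (\<eta> powr p * \<delta> powr (real DIM('a) - lam) * measure lebesgue (ball (0::'a) 1))"
      by (rule order_trans[OF SUP_morrey_M_le_if_bounded[OF close p \<open>0 < r\<close>] ennreal_leI])
  next
    fix r assume "\<delta> \<le> r"
    with \<delta> show "SUP_morrey_M p lam (\<lambda>y. f y - grid_approx f \<delta> y) r \<le>
        ennreal (2 powr p) * (morrey_sup p lam f + ennreal ?c * morrey_sup p lam f)"
      by (intro order_trans[OF SUP_morrey_M_grid_approx_error_le[OF cont meas \<delta> _ p]] mult_left_mono
          add_mono SUP_morrey_M_le_morrey_sup) auto
  qed
  also have "\<dots> < \<infinity>" using fin by (simp add: ennreal_mult_less_top)
  finally have "morrey_sup p lam (\<lambda>y. f y - grid_approx f \<delta> y) < \<infinity>" .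
  moreover have "(\<lambda>y. f y - grid_approx f \<delta> y) \<in> borel_measurable lebesgue"
    using meas grid_approx_borel_measurable[OF \<delta>] by (rule borel_measurable_diff)
  ultimately show ?thesis by (simp add: morrey_space_iff)
qed

lemma grid_approx_error_V0_Vinf:
  fixes f :: "'a::euclidean_space \<Rightarrow> real"
  assumes lam: "lam < real DIM('a)" and p: "0 \<le> p" and f: "f \<in> Vinf_morrey p lam"
    and cont: "continuous_on UNIV f" and \<delta>: "0 < \<delta>" and close: "\<And>y. \<bar>f y - grid_approx f \<delta> y\<bar> \<le> \<eta>"
  shows "(\<lambda>y. f y - grid_approx f \<delta> y) \<in> V0_morrey p lam \<inter> Vinf_morrey p lam"
proof -
  let ?e = "\<lambda>y. f y - grid_approx f \<delta> y" and ?K = "5 * real DIM('a)"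
    and ?c = "2 ^ DIM('a) * (5 * real DIM('a)) powr lam"
  have A: "(SUP_morrey_M p lam f \<longlongrightarrow> 0) at_top" and meas: "f \<in> borel_measurable lebesgue"
    using f by (simp_all add: Vinf_morrey_def morrey_space_iff)
  have "(SUP_morrey_M p lam ?e \<longlongrightarrow> 0) (at_right 0)"
  proof (rule tendsto_sandwich[OF _ _ tendsto_const])
    show "\<forall>\<^sub>F r in at_right 0. SUP_morrey_M p lam ?e r \<le>
        ennreal (\<eta> powr p * r powr (real DIM('a) - lam) * measure lebesgue (ball (0::'a) 1))"
      using eventually_at_right_less
      by (rule eventually_mono) (rule SUP_morrey_M_le_if_bounded[OF close p])
    have "((\<lambda>r. r powr (real DIM('a) - lam)) \<longlongrightarrow> 0) (at_right 0)"
      using lam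
      by (intro tendsto_zero_powrI tendsto_ident_at eventually_mono[OF eventually_at_right_less]) auto
    then show "((\<lambda>r. ennreal (\<eta> powr p * r powr (real DIM('a) - lam) *
        measure lebesgue (ball (0::'a) 1))) \<longlongrightarrow> 0) (at_right 0)"
      by (intro tendsto_ennrealI[where x=0, simplified] tendsto_mult_right_zero tendsto_mult_left_zero)
  qed simp
  moreover have "(SUP_morrey_M p lam ?e \<longlongrightarrow> 0) at_top"
  proof (rule tendsto_sandwich[OF _ _ tendsto_const])
    show "\<forall>\<^sub>F r in at_top. SUP_morrey_M p lam ?e r \<le>
        ennreal (2 powr p) * (SUP_morrey_M p lam f r + ennreal ?c * SUP_morrey_M p lam f (?K * r))"
      using eventually_ge_at_top
      by (rule eventually_mono) (rule SUP_morrey_M_grid_approx_error_le[OF cont meas \<delta> _ p])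
    have "filterlim (\<lambda>r. ?K * r) at_top at_top"
      by (intro filterlim_tendsto_pos_mult_at_top[OF tendsto_const _ filterlim_ident]) simp
    then have "((\<lambda>r. SUP_morrey_M p lam f (?K * r)) \<longlongrightarrow> 0) at_top"
      by (rule filterlim_compose[OF A])
    then have "((\<lambda>r. ennreal (2 powr p) *
        (SUP_morrey_M p lam f r + ennreal ?c * SUP_morrey_M p lam f (?K * r)))
        \<longlongrightarrow> ennreal (2 powr p) * (0 + ennreal ?c * 0)) at_top"
      by (intro ennreal_tendsto_cmult tendsto_add A tendsto_mult) simp_all
    then show "((\<lambda>r. ennreal (2 powr p) *
        (SUP_morrey_M p lam f r + ennreal ?c * SUP_morrey_M p lam f (?K * r))) \<longlongrightarrow> 0) at_top"
      by simp
  qed simp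
  moreover have "?e \<in> morrey_space p lam"
    using f
    by (intro grid_approx_error_morrey_space[OF lam p _ cont \<delta> close]) (simp add: Vinf_morrey_def)
  ultimately show ?thesis by (simp add: V0_morrey_def Vinf_morrey_def)
qed

lemma exists_pos_mult_powr_le:
  fixes C e p :: real
  assumes "0 \<le> C" "0 < e" "0 < p"
  obtains \<eta> where "\<eta> > 0" "C * \<eta> powr p \<le> e"
proof
  let ?\<eta> = "(e / (C + 1)) powr (1 / p)"
  show "?\<eta> > 0" using assms by simp
  have "C * ?\<eta> powr p = e * (C / (C + 1))" using assms by (simp add: powr_powr)
  also have "\<dots> \<le> e" using assms by (intro mult_left_le) auto
  finally show "C * ?\<eta> powr p \<le> e" .
qed

lemma eventually_grid_approx_error_small_radii:
  fixes f :: "'a::euclidean_space \<Rightarrow> real"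
  assumes lam: "lam < real DIM('a)" and p: "0 < p" and uc: "uniformly_continuous_on UNIV f"
    and "0 < R" "0 < e"
  shows "\<forall>\<^sub>F \<delta> in at_right 0. \<forall>r. 0 < r \<and> r \<le> R \<longrightarrow>
    SUP_morrey_M p lam (\<lambda>y. f y - grid_approx f \<delta> y) r \<le> ennreal e"
proof -
  define vol where "vol = measure lebesgue (ball (0::'a) 1)"
  obtain \<eta> where \<eta>: "\<eta> > 0" "R powr (real DIM('a) - lam) * vol * \<eta> powr p \<le> e"
    using exists_pos_mult_powr_le[of "R powr (real DIM('a) - lam) * vol" e p] assms
    by (auto simp: vol_def)
  from eventually_grid_approx_close[OF uc \<eta>(1)] show ?thesis
  proof eventually_elim
    case (elim \<delta>)
    show ?case
    proof (intro allI impI)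
      fix r assume r: "0 < r \<and> r \<le> R"
      have "\<eta> powr p * r powr (real DIM('a) - lam) * vol \<le> \<eta> powr p * R powr (real DIM('a) - lam) * vol"
        using r lam by (intro mult_right_mono mult_left_mono powr_mono2) (auto simp: vol_def)
      also have "\<dots> \<le> e" using \<eta>(2) by (simp add: mult_ac)
      finally show "SUP_morrey_M p lam (\<lambda>y. f y - grid_approx f \<delta> y) r \<le> ennreal e"
        unfolding vol_def using elim r p
        by (intro order_trans[OF SUP_morrey_M_le_if_bounded ennreal_leI]) auto
    qed
  qed
qed

lemma grid_approx_error_large_radii:
  fixes f :: "'a::euclidean_space \<Rightarrow> real"
  assumes p: "0 \<le> p" and f: "f \<in> Vinf_morrey p lam" and cont: "continuous_on UNIV f" and "0 < e"
  obtains R where "0 < R"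
    "\<And>\<delta> r. 0 < \<delta> \<Longrightarrow> \<delta> \<le> R \<Longrightarrow> R \<le> r \<Longrightarrow>
      SUP_morrey_M p lam (\<lambda>y. f y - grid_approx f \<delta> y) r \<le> ennreal e"
proof -
  define c where "c = 2 ^ DIM('a) * (5 * real DIM('a)) powr lam"
  define e\<^sub>1 where "e\<^sub>1 = e / (2 powr p * (1 + c))"
  have c: "0 \<le> c" unfolding c_def by simp
  have e\<^sub>1: "0 < e\<^sub>1" using \<open>0 < e\<close> c unfolding e\<^sub>1_def by (intro divide_pos_pos mult_pos_pos) auto
  have meas: "f \<in> borel_measurable lebesgue" and A: "(SUP_morrey_M p lam f \<longlongrightarrow> 0) at_top"
    using f by (simp_all add: Vinf_morrey_def morrey_space_iff)
  from A have "\<forall>\<^sub>F r in at_top. SUP_morrey_M p lam f r < ennreal e\<^sub>1"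
    by (rule order_tendstoD(2)) (use e\<^sub>1 in simp)
  then obtain R0 where R0: "\<And>r. R0 \<le> r \<Longrightarrow> SUP_morrey_M p lam f r < ennreal e\<^sub>1"
    unfolding eventually_at_top_linorder by blast
  show ?thesis
  proof (rule that[of "max R0 1"])
    fix \<delta> r assume \<delta>: "0 < \<delta>" "\<delta> \<le> max R0 1" and r: "max R0 1 \<le> r"
    have "1 \<le> real DIM('a)" by (simp add: DIM_positive Suc_le_eq)
    then have "1 \<le> 5 * real DIM('a)" by linarith
    then have "r \<le> 5 * real DIM('a) * r" using r mult_right_mono[of 1 "5 * real DIM('a)" r] by simp
    then have "R0 \<le> 5 * real DIM('a) * r" using r by linarith
    then have "SUP_morrey_M p lam (\<lambda>y. f y - grid_approx f \<delta> y) r \<le>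
        ennreal (2 powr p) * (ennreal e\<^sub>1 + ennreal c * ennreal e\<^sub>1)"
      using \<delta> r
      by (intro order_trans[OF SUP_morrey_M_grid_approx_error_le[OF cont meas \<delta>(1) _ p,
            where lam=lam, folded c_def]] mult_left_mono add_mono less_imp_le[OF R0]) auto
    also have "\<dots> = ennreal ((2 powr p * (1 + c)) * e\<^sub>1)"
      using e\<^sub>1 c by (simp add: ennreal_mult ennreal_plus algebra_simps)
    also have "(2 powr p * (1 + c)) * e\<^sub>1 = e"
      using c unfolding e\<^sub>1_def by simp
    finally show "SUP_morrey_M p lam (\<lambda>y. f y - grid_approx f \<delta> y) r \<le> ennreal e" .
  qed simp
qed

lemma eventually_morrey_norm_grid_approx_error_less:
  fixes f :: "'a::euclidean_space \<Rightarrow> real"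
  assumes lam: "lam < real DIM('a)" and p: "0 < p" and f: "f \<in> Vinf_morrey p lam"
    and uc: "uniformly_continuous_on UNIV f" and "\<epsilon> > 0"
  shows "\<forall>\<^sub>F \<delta> in at_right 0. morrey_norm p lam (\<lambda>y. f y - grid_approx f \<delta> y) < \<epsilon>"
proof -
  define e where "e = \<epsilon> powr p / 2"
  have e: "0 < e" "e < \<epsilon> powr p" using \<open>\<epsilon> > 0\<close> unfolding e_def by auto
  obtain R where R: "0 < R" "\<And>\<delta> r. 0 < \<delta> \<Longrightarrow> \<delta> \<le> R \<Longrightarrow> R \<le> r \<Longrightarrow>
      SUP_morrey_M p lam (\<lambda>y. f y - grid_approx f \<delta> y) r \<le> ennreal e"
    using grid_approx_error_large_radii[OF _ f uniformly_continuous_imp_continuous[OF uc] e(1)] p by auto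
  have "\<forall>\<^sub>F \<delta> in at_right 0. (0 < \<delta> \<and> \<delta> < R) \<and> (\<forall>r. 0 < r \<and> r \<le> R \<longrightarrow>
      SUP_morrey_M p lam (\<lambda>y. f y - grid_approx f \<delta> y) r \<le> ennreal e)"
    using R(1) by (intro eventually_conj eventually_at_right_less order_tendstoD(2)[OF tendsto_ident_at]
        eventually_grid_approx_error_small_radii[OF lam p uc _ e(1)])
  then show ?thesis
  proof eventually_elim
    case (elim \<delta>)
    then have SUP_le: "SUP_morrey_M p lam (\<lambda>y. f y - grid_approx f \<delta> y) r \<le> ennreal e" if "0 < r" for r
      using R(2)[of \<delta> r] that by (cases "r \<le> R") auto
    show ?case
    proof (rule morrey_norm_less[OF _ less_imp_le[OF e(1)] e(2) \<open>\<epsilon> > 0\<close> p])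
      fix x :: 'a and r :: real assume "r > 0"
      show "morrey_M p lam (\<lambda>y. f y - grid_approx f \<delta> y) x r \<le> ennreal e"
        by (rule order_trans[OF SUP_upper SUP_le[OF \<open>r > 0\<close>]]) simp
    qed
  qed
qed

theorem theorem5p2:
  fixes f :: "'a::euclidean_space \<Rightarrow> real" and p lam :: real
  assumes "0 \<le> lam" and "lam < real DIM('a)" and "1 \<le> p"
    and "f \<in> V0_morrey p lam \<inter> Vinf_morrey p lam"
    and "uniformly_continuous_on UNIV f"
  shows "\<forall>\<epsilon>>0. \<exists>g. g \<in> V0_morrey p lam \<inter> Vinf_morrey p lam \<and> smooth g \<and>
           morrey_norm p lam (\<lambda>x. f x - g x) < \<epsilon>"
proof (intro allI impI)
  fix \<epsilon> :: real assume "\<epsilon> > 0"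
  have p: "0 < p" using assms(3) by simp
  have "\<forall>\<^sub>F \<delta> in at_right 0. 0 < \<delta> \<and> (\<forall>y. \<bar>f y - grid_approx f \<delta> y\<bar> \<le> 1) \<and>
      morrey_norm p lam (\<lambda>y. f y - grid_approx f \<delta> y) < \<epsilon>"
    using assms(2,4,5) p \<open>\<epsilon> > 0\<close>
    by (intro eventually_conj eventually_at_right_less eventually_grid_approx_close
        eventually_morrey_norm_grid_approx_error_less) simp_all
  then obtain \<delta> where \<delta>: "0 < \<delta>" "\<And>y. \<bar>f y - grid_approx f \<delta> y\<bar> \<le> 1"
    and norm: "morrey_norm p lam (\<lambda>y. f y - grid_approx f \<delta> y) < \<epsilon>"
    using eventually_happens'[OF trivial_limit_at_right_real] by blast
  have "(\<lambda>y. f y - grid_approx f \<delta> y) \<in> V0_morrey p lam \<inter> Vinf_morrey p lam"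
    using assms(2,4) p uniformly_continuous_imp_continuous[OF assms(5)] \<delta>
    by (intro grid_approx_error_V0_Vinf) auto
  from V0_Vinf_morrey_diff[OF _ assms(4) this] p
  have "grid_approx f \<delta> \<in> V0_morrey p lam \<inter> Vinf_morrey p lam" by simp
  then show "\<exists>g. g \<in> V0_morrey p lam \<inter> Vinf_morrey p lam \<and> smooth g \<and>
      morrey_norm p lam (\<lambda>x. f x - g x) < \<epsilon>"
    using smooth_grid_approx[OF \<delta>(1)] norm by blast
qed

end
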